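(* (i) $\overline{H_{par}}$ is an $H$-$H_{par}$-bimodule via $$h\triangleright\Big(\sum_i h_i\triangleright\varphi(x_i)\Big)\triangleleft y=\sum_i hh_i\triangleright\varphi(x_iy),$$ for $h,h_i\in H$ and $x_i,y\in H_{par}$. (ii) Let $M$ be a partial $H$-module, regarded as a left $H_{par}$-module. Equip $\overline{H_{par}}\otimes_{H_{par}}M$ with the left $H$-module structure coming from (i), and define $$T:\overline{H_{par}}\otimes_{H_{par}}M\to\overline{H_{par}}\otimes_{H_{par}}M,\quad T(f\otimes m)=\varphi(1)\otimes f(1_H)m,$$ $$\phi:M\to\overline{H_{par}}\otimes_{H_{par}}M,\quad \phi(m)=\varphi(1)\otimes m.$$ Here $1$ is the unit of $H_{par}$ and $f(1_H)\in H_{par}$ acts on $m$. Then $((\overline{H_{par}}\otimes_{H_{par}}M,T),\phi)$ is a proper dilation of $M$ (called the secondary dilation of $M$).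
   Context: Throughout, $k$ is a field and $H$ is a Hopf algebra over $k$ with bijective antipode $S$ and Sweedler notation $\Delta(h)=h_{(1)}\otimes h_{(2)}$. A partial $H$-module is a vector space $M$ with linear $\pi:H\to\mathrm{End}_k(M)$ satisfying, for all $h,k\in H$: - $\pi(1_H)=\mathrm{id}$; - $\pi(h)\pi(k_{(1)})\pi(S(k_{(2)}))=\pi(hk_{(1)})\pi(S(k_{(2)}))$; - $\pi(h_{(1)})\pi(S(h_{(2)}))\pi(k)=\pi(h_{(1)})\pi(S(h_{(2)})k)$; - $\pi(h)\pi(S(k_{(1)}))\pi(k_{(2)})=\pi(hS(k_{(1)}))\pi(k_{(2)})$; - $\pi(S(h_{(1)}))\pi(h_{(2)})\pi(k)=\pi(S(h_{(1)}))\pi(h_{(2)}k)$. The algebra $H_{par}$ is the quotient of the tensor algebra $T(H)$ (writing $[h]$ for the image of $h$) by the ideal generated by, for all $h,k\in H$: - $[1_H]-1$; - $[h][k_{(1)}][S(k_{(2)})]-[hk_{(1)}][S(k_{(2)})]$; - $[h_{(1)}][S(h_{(2)})][k]-[h_{(1)}][S(h_{(2)})k]$; - $[h][S(k_{(1)})][k_{(2)}]-[hS(k_{(1)})][k_{(2)}]$; - $[S(h_{(1)})][h_{(2)}][k]-[S(h_{(1)})][h_{(2)}k]$. Partial $H$-modules are identified with left $H_{par}$-modules via $[h]m=\pi(h)(m)$. In particular, $H_{par}$ is a partial $H$-module via $\pi(h)(x)=[h]x$. For a left $H$-module $N$ and a linear projection $T$, put $T_h(x)=h_{(1)}\triangleright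 T(S(h_{(2)})\triangleright x)$. $T$ satisfies the c-condition if $T_h\circ T=T\circ T_h$ for all $h$; then $T(N)$ is a partial $H$-module via $\pi_T(h)(x)=T(h\triangleright x)$. A dilation of a partial module $M$ is $((N,T),\theta)$ with $N$ a left $H$-module, $T$ a projection satisfying the c-condition, and $\theta:M\to T(N)$ an isomorphism of partial $H$-modules onto $(T(N),\pi_T)$. It is proper if $N$ is generated as an $H$-module by $T(N)$. Standard dilation of a partial module $(P,\rho)$: $\operatorname{Hom}_k(H,P)$ is a left $H$-module via $(h\triangleright f)(k)=f(kh)$, $\varphi(p)(h)=\rho(h)(p)$, $\overline P=H\triangleright\varphi(P)$. Thus $\overline{H_{par}}=H\triangleright\varphi(H_{par})\subseteq\operatorname{Hom}_k(H,H_{par})$ with $\varphi(x)(h)=[h]x$. *)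

theory Defs
  imports "HOL-Library.Poly_Mapping"
begin

definition lin_map :: "('k::field \<Rightarrow> 'a::ab_group_add \<Rightarrow> 'a) \<Rightarrow> ('k \<Rightarrow> 'b::ab_group_add \<Rightarrow> 'b) \<Rightarrow> ('a \<Rightarrow> 'b) \<Rightarrow> bool" where
  "lin_map s1 s2 f \<longleftrightarrow> (\<forall>x y. f (x + y) = f x + f y) \<and> (\<forall>c x. f (s1 c x) = s2 c (f x))"

definition vspace :: "('k::field \<Rightarrow> 'a::ab_group_add \<Rightarrow> 'a) \<Rightarrow> bool" where
  "vspace s \<longleftrightarrow> (\<forall>c x y. s c (x + y) = s c x + s c y) \<and> (\<forall>c d x. s (c + d) x = s c x + s d x)
     \<and> (\<forall>c d x. s (c * d) x = s c (s d x)) \<and> (\<forall>x. s 1 x = x)"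

text \<open>Elements of H (x) H (resp. H (x) H (x) H) are represented by finite lists of pairs
  (sums of simple tensors). Two representations denote the same tensor iff they pair equally
  with all f (x) g for linear functionals f, g (nondegeneracy of the pairing over a field).\<close>
definition teq :: "('k::field \<Rightarrow> 'h::ab_group_add \<Rightarrow> 'h) \<Rightarrow> ('h \<times> 'h) list \<Rightarrow> ('h \<times> 'h) list \<Rightarrow> bool" where
  "teq sc xs ys \<longleftrightarrow> (\<forall>f g. lin_map sc (*) f \<longrightarrow> lin_map sc (*) g \<longrightarrow>
      (\<Sum>(a,b)\<leftarrow>xs. f a * g b) = (\<Sum>(a,b)\<leftarrow>ys. f a * g b))"

definition teq3 :: "('k::field \<Rightarrow> 'h::ab_group_add \<Rightarrow> 'h) \<Rightarrow> ('h \<times> 'h \<times> 'h) list \<Rightarrow> ('h \<times> 'h \<times> 'h) list \<Rightarrow> bool" where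
  "teq3 sc xs ys \<longleftrightarrow> (\<forall>f g l. lin_map sc (*) f \<longrightarrow> lin_map sc (*) g \<longrightarrow> lin_map sc (*) l \<longrightarrow>
      (\<Sum>(a,b,c)\<leftarrow>xs. f a * g b * l c) = (\<Sum>(a,b,c)\<leftarrow>ys. f a * g b * l c))"

text \<open>H is the type 'h (a ring), a k-algebra via sc; D h is a representation of \<Delta>(h)
  (Sweedler: \<Delta>(h) = \<Sum>(h1,h2)\<leftarrow>D h. h1 (x) h2); eps is the counit, S the antipode.\<close>
definition hopf_algebra :: "('k::field \<Rightarrow> 'h::ring_1 \<Rightarrow> 'h) \<Rightarrow> ('h \<Rightarrow> ('h \<times> 'h) list) \<Rightarrow> ('h \<Rightarrow> 'k) \<Rightarrow> ('h \<Rightarrow> 'h) \<Rightarrow> bool" where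
  "hopf_algebra sc D eps S \<longleftrightarrow>
     vspace sc \<and>
     (\<forall>c x y. sc c (x * y) = sc c x * y \<and> sc c (x * y) = x * sc c y) \<and>
     (\<forall>x y. teq sc (D (x + y)) (D x @ D y)) \<and>
     (\<forall>c x. teq sc (D (sc c x)) [(sc c a, b). (a, b) \<leftarrow> D x]) \<and>
     (\<forall>x. teq3 sc [(a1, a2, b). (a, b) \<leftarrow> D x, (a1, a2) \<leftarrow> D a]
                  [(a, b1, b2). (a, b) \<leftarrow> D x, (b1, b2) \<leftarrow> D b]) \<and>
     (\<forall>x y. teq sc (D (x * y)) [(a * c, b * d). (a, b) \<leftarrow> D x, (c, d) \<leftarrow> D y]) \<and>
     teq sc (D 1) [(1, 1)] \<and>
     lin_map sc (*) eps \<and> eps 1 = 1 \<and> (\<forall>x y. eps (x * y) = eps x * eps y) \<and>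
     (\<forall>x. (\<Sum>(a,b)\<leftarrow>D x. sc (eps a) b) = x \<and> (\<Sum>(a,b)\<leftarrow>D x. sc (eps b) a) = x) \<and>
     lin_map sc sc S \<and>
     (\<forall>x. (\<Sum>(a,b)\<leftarrow>D x. S a * b) = sc (eps x) 1 \<and> (\<Sum>(a,b)\<leftarrow>D x. a * S b) = sc (eps x) 1) \<and>
     bij S"

definition csum :: "('v \<Rightarrow> 'v \<Rightarrow> 'v) \<Rightarrow> 'v \<Rightarrow> 'v list \<Rightarrow> 'v" where
  "csum add z xs = foldr add xs z"

definition cvs :: "'v set \<Rightarrow> ('v \<Rightarrow> 'v \<Rightarrow> 'v) \<Rightarrow> 'v \<Rightarrow> ('k::field \<Rightarrow> 'v \<Rightarrow> 'v) \<Rightarrow> bool" where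
  "cvs V add z s \<longleftrightarrow> z \<in> V \<and> (\<forall>x\<in>V. \<forall>y\<in>V. add x y \<in> V) \<and> (\<forall>c. \<forall>x\<in>V. s c x \<in> V) \<and>
     (\<forall>x\<in>V. \<forall>y\<in>V. \<forall>w\<in>V. add (add x y) w = add x (add y w)) \<and>
     (\<forall>x\<in>V. \<forall>y\<in>V. add x y = add y x) \<and> (\<forall>x\<in>V. add z x = x) \<and>
     (\<forall>x\<in>V. \<exists>y\<in>V. add x y = z) \<and>
     (\<forall>c. \<forall>x\<in>V. \<forall>y\<in>V. s c (add x y) = add (s c x) (s c y)) \<and>
     (\<forall>c d. \<forall>x\<in>V. s (c + d) x = add (s c x) (s d x)) \<and>
     (\<forall>c d. \<forall>x\<in>V. s (c * d) x = s c (s d x)) \<and> (\<forall>x\<in>V. s 1 x = x)"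

definition clin :: "'a set \<Rightarrow> ('a \<Rightarrow> 'a \<Rightarrow> 'a) \<Rightarrow> ('k::field \<Rightarrow> 'a \<Rightarrow> 'a) \<Rightarrow>
                    'b set \<Rightarrow> ('b \<Rightarrow> 'b \<Rightarrow> 'b) \<Rightarrow> ('k \<Rightarrow> 'b \<Rightarrow> 'b) \<Rightarrow> ('a \<Rightarrow> 'b) \<Rightarrow> bool" where
  "clin V1 add1 s1 V2 add2 s2 f \<longleftrightarrow> (\<forall>x\<in>V1. f x \<in> V2) \<and>
     (\<forall>x\<in>V1. \<forall>y\<in>V1. f (add1 x y) = add2 (f x) (f y)) \<and> (\<forall>c. \<forall>x\<in>V1. f (s1 c x) = s2 c (f x))"

definition hmod :: "('k::field \<Rightarrow> 'h::ring_1 \<Rightarrow> 'h) \<Rightarrow> 'v set \<Rightarrow> ('v \<Rightarrow> 'v \<Rightarrow> 'v) \<Rightarrow> 'v \<Rightarrow> ('k \<Rightarrow> 'v \<Rightarrow> 'v)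
                    \<Rightarrow> ('h \<Rightarrow> 'v \<Rightarrow> 'v) \<Rightarrow> bool" where
  "hmod sc V add z s act \<longleftrightarrow> cvs V add z s \<and> (\<forall>h. clin V add s V add s (act h)) \<and>
     (\<forall>h k. \<forall>v\<in>V. act (h + k) v = add (act h v) (act k v)) \<and>
     (\<forall>c h. \<forall>v\<in>V. act (sc c h) v = s c (act h v)) \<and>
     (\<forall>h k. \<forall>v\<in>V. act (h * k) v = act h (act k v)) \<and> (\<forall>v\<in>V. act 1 v = v)"

definition pmod :: "('k::field \<Rightarrow> 'h::ring_1 \<Rightarrow> 'h) \<Rightarrow> ('h \<Rightarrow> ('h \<times> 'h) list) \<Rightarrow> ('h \<Rightarrow> 'h) \<Rightarrow>
                    'v set \<Rightarrow> ('v \<Rightarrow> 'v \<Rightarrow> 'v) \<Rightarrow> 'v \<Rightarrow> ('k \<Rightarrow> 'v \<Rightarrow> 'v) \<Rightarrow> ('h \<Rightarrow> 'v \<Rightarrow> 'v) \<Rightarrow> bool" where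
  "pmod sc D S V add z s \<pi> \<longleftrightarrow> cvs V add z s \<and> (\<forall>h. clin V add s V add s (\<pi> h)) \<and>
     (\<forall>h k. \<forall>v\<in>V. \<pi> (h + k) v = add (\<pi> h v) (\<pi> k v)) \<and>
     (\<forall>c h. \<forall>v\<in>V. \<pi> (sc c h) v = s c (\<pi> h v)) \<and>
     (\<forall>v\<in>V. \<pi> 1 v = v) \<and>
     (\<forall>h k. \<forall>v\<in>V. csum add z [\<pi> h (\<pi> a (\<pi> (S b) v)). (a, b) \<leftarrow> D k]
                   = csum add z [\<pi> (h * a) (\<pi> (S b) v). (a, b) \<leftarrow> D k]) \<and>
     (\<forall>h k. \<forall>v\<in>V. csum add z [\<pi> a (\<pi> (S b) (\<pi> k v)). (a, b) \<leftarrow> D h]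
                   = csum add z [\<pi> a (\<pi> (S b * k) v). (a, b) \<leftarrow> D h]) \<and>
     (\<forall>h k. \<forall>v\<in>V. csum add z [\<pi> h (\<pi> (S a) (\<pi> b v)). (a, b) \<leftarrow> D k]
                   = csum add z [\<pi> (h * S a) (\<pi> b v). (a, b) \<leftarrow> D k]) \<and>
     (\<forall>h k. \<forall>v\<in>V. csum add z [\<pi> (S a) (\<pi> b (\<pi> k v)). (a, b) \<leftarrow> D h]
                   = csum add z [\<pi> (S a) (\<pi> (b * k) v). (a, b) \<leftarrow> D h])"

definition Tc :: "('h \<Rightarrow> ('h \<times> 'h) list) \<Rightarrow> ('h \<Rightarrow> 'h) \<Rightarrow> ('v \<Rightarrow> 'v \<Rightarrow> 'v) \<Rightarrow> 'v \<Rightarrow> ('h \<Rightarrow> 'v \<Rightarrow> 'v)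
                  \<Rightarrow> ('v \<Rightarrow> 'v) \<Rightarrow> 'h \<Rightarrow> 'v \<Rightarrow> 'v" where
  "Tc D S add z act T h x = csum add z [act a (T (act (S b) x)). (a, b) \<leftarrow> D h]"

text \<open>((N,T),theta) is a dilation of the partial module (M, pi) (M the whole type 'm).\<close>
definition dilation :: "('k::field \<Rightarrow> 'h::ring_1 \<Rightarrow> 'h) \<Rightarrow> ('h \<Rightarrow> ('h \<times> 'h) list) \<Rightarrow> ('h \<Rightarrow> 'h) \<Rightarrow>
      ('k \<Rightarrow> 'm::ab_group_add \<Rightarrow> 'm) \<Rightarrow> ('h \<Rightarrow> 'm \<Rightarrow> 'm) \<Rightarrow>
      'v set \<Rightarrow> ('v \<Rightarrow> 'v \<Rightarrow> 'v) \<Rightarrow> 'v \<Rightarrow> ('k \<Rightarrow> 'v \<Rightarrow> 'v) \<Rightarrow> ('h \<Rightarrow> 'v \<Rightarrow> 'v) \<Rightarrow>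
      ('v \<Rightarrow> 'v) \<Rightarrow> ('m \<Rightarrow> 'v) \<Rightarrow> bool" where
  "dilation sc D S scM \<pi> N add z s act T \<theta> \<longleftrightarrow>
     hmod sc N add z s act \<and>
     clin N add s N add s T \<and> (\<forall>x\<in>N. T (T x) = T x) \<and>
     (\<forall>h. \<forall>x\<in>N. Tc D S add z act T h (T x) = T (Tc D S add z act T h x)) \<and>
     pmod sc D S (T ` N) add z s (\<lambda>h x. T (act h x)) \<and>
     bij_betw \<theta> UNIV (T ` N) \<and>
     (\<forall>m m'. \<theta> (m + m') = add (\<theta> m) (\<theta> m')) \<and> (\<forall>c m. \<theta> (scM c m) = s c (\<theta> m)) \<and>
     (\<forall>h m. \<theta> (\<pi> h m) = T (act h (\<theta> m)))"

definition proper_dilation where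
  "proper_dilation sc D S scM \<pi> N add z s act T \<theta> \<longleftrightarrow>
     dilation sc D S scM \<pi> N add z s act T \<theta> \<and>
     (\<forall>x\<in>N. \<exists>l. set l \<subseteq> UNIV \<times> T ` N \<and> x = csum add z (map (\<lambda>(h, t). act h t) l))"

definition bimodule :: "('k::field \<Rightarrow> 'h::ring_1 \<Rightarrow> 'h) \<Rightarrow>
      'v set \<Rightarrow> ('v \<Rightarrow> 'v \<Rightarrow> 'v) \<Rightarrow> 'v \<Rightarrow> ('k \<Rightarrow> 'v \<Rightarrow> 'v) \<Rightarrow> ('h \<Rightarrow> 'v \<Rightarrow> 'v) \<Rightarrow>
      'a set \<Rightarrow> ('a \<Rightarrow> 'a \<Rightarrow> 'a) \<Rightarrow> ('k \<Rightarrow> 'a \<Rightarrow> 'a) \<Rightarrow> ('a \<Rightarrow> 'a \<Rightarrow> 'a) \<Rightarrow> 'a \<Rightarrow>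
      ('v \<Rightarrow> 'a \<Rightarrow> 'v) \<Rightarrow> bool" where
  "bimodule sc V add z s lact A aadd asc amul aone ract \<longleftrightarrow>
     hmod sc V add z s lact \<and>
     (\<forall>f\<in>V. \<forall>y\<in>A. ract f y \<in> V) \<and>
     (\<forall>f\<in>V. ract f aone = f) \<and>
     (\<forall>f\<in>V. \<forall>y\<in>A. \<forall>y'\<in>A. ract (ract f y) y' = ract f (amul y y')) \<and>
     (\<forall>f\<in>V. \<forall>g\<in>V. \<forall>y\<in>A. ract (add f g) y = add (ract f y) (ract g y)) \<and>
     (\<forall>f\<in>V. \<forall>y\<in>A. \<forall>y'\<in>A. ract f (aadd y y') = add (ract f y) (ract f y')) \<and>
     (\<forall>c. \<forall>f\<in>V. \<forall>y\<in>A. ract f (asc c y) = s c (ract f y) \<and> ract (s c f) y = s c (ract f y)) \<and>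
     (\<forall>h. \<forall>f\<in>V. \<forall>y\<in>A. lact h (ract f y) = ract (lact h f) y)"

definition tsc :: "'k \<Rightarrow> ('a \<Rightarrow>\<^sub>0 'k::field) \<Rightarrow> ('a \<Rightarrow>\<^sub>0 'k)" where
  "tsc c p = Poly_Mapping.map (\<lambda>a. c * a) p"

definition fspan :: "('a \<Rightarrow>\<^sub>0 'k::field) set \<Rightarrow> ('a \<Rightarrow>\<^sub>0 'k) set" where
  "fspan X = {(\<Sum>x\<in>F. tsc (c x) x) | F c. finite F \<and> F \<subseteq> X}"

definition qcl :: "'a::ab_group_add set \<Rightarrow> 'a \<Rightarrow> 'a set" where
  "qcl W x = {y. y - x \<in> W}"

definition rep :: "'a set \<Rightarrow> 'a" where
  "rep A = (SOME x. x \<in> A)"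

definition pmmap :: "('a \<Rightarrow> 'b) \<Rightarrow> ('a \<Rightarrow>\<^sub>0 'k::field) \<Rightarrow> ('b \<Rightarrow>\<^sub>0 'k)" where
  "pmmap g p = (\<Sum>k\<in>Poly_Mapping.keys p. Poly_Mapping.single (g k) (Poly_Mapping.lookup p k))"

section \<open>The tensor algebra T(H) (words over H) and H_par\<close>

definition tmul :: "('h list \<Rightarrow>\<^sub>0 'k::field) \<Rightarrow> ('h list \<Rightarrow>\<^sub>0 'k) \<Rightarrow> ('h list \<Rightarrow>\<^sub>0 'k)" where
  "tmul p q = (\<Sum>u\<in>Poly_Mapping.keys p. \<Sum>v\<in>Poly_Mapping.keys q. Poly_Mapping.single (u @ v) (Poly_Mapping.lookup p u * Poly_Mapping.lookup q v))"

definition tone :: "'h list \<Rightarrow>\<^sub>0 'k::field" where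
  "tone = Poly_Mapping.single [] 1"

definition gen :: "'h \<Rightarrow> ('h list \<Rightarrow>\<^sub>0 'k::field)" where
  "gen h = Poly_Mapping.single [h] 1"

text \<open>Relations: the first two make the free algebra on the set H into T(H);
  the rest are the defining relations of H_par.\<close>
definition par_rels :: "('k::field \<Rightarrow> 'h::ring_1 \<Rightarrow> 'h) \<Rightarrow> ('h \<Rightarrow> ('h \<times> 'h) list) \<Rightarrow> ('h \<Rightarrow> 'h)
                        \<Rightarrow> ('h list \<Rightarrow>\<^sub>0 'k) set" where
  "par_rels sc D S =
     {gen (x + y) - gen x - gen y | x y. True} \<union>
     {gen (sc c x) - tsc c (gen x) | c x. True} \<union>
     {gen 1 - tone} \<union>
     {(\<Sum>(a,b)\<leftarrow>D k. tmul (tmul (gen h) (gen a)) (gen (S b)))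
        - (\<Sum>(a,b)\<leftarrow>D k. tmul (gen (h * a)) (gen (S b))) | h k. True} \<union>
     {(\<Sum>(a,b)\<leftarrow>D h. tmul (tmul (gen a) (gen (S b))) (gen k))
        - (\<Sum>(a,b)\<leftarrow>D h. tmul (gen a) (gen (S b * k))) | h k. True} \<union>
     {(\<Sum>(a,b)\<leftarrow>D k. tmul (tmul (gen h) (gen (S a))) (gen b))
        - (\<Sum>(a,b)\<leftarrow>D k. tmul (gen (h * S a)) (gen b)) | h k. True} \<union>
     {(\<Sum>(a,b)\<leftarrow>D h. tmul (tmul (gen (S a)) (gen b)) (gen k))
        - (\<Sum>(a,b)\<leftarrow>D h. tmul (gen (S a)) (gen (b * k))) | h k. True}"

definition par_ideal where
  "par_ideal sc D S = fspan {tmul (tmul u r) v | u r v. r \<in> par_rels sc D S}"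

type_synonym ('h, 'k) hpar = "('h list \<Rightarrow>\<^sub>0 'k) set"

definition hp_carrier :: "('k::field \<Rightarrow> 'h::ring_1 \<Rightarrow> 'h) \<Rightarrow> ('h \<Rightarrow> ('h \<times> 'h) list) \<Rightarrow> ('h \<Rightarrow> 'h)
     \<Rightarrow> ('h, 'k) hpar set" where
  "hp_carrier sc D S = range (qcl (par_ideal sc D S))"
definition "hp_add sc D S A B = qcl (par_ideal sc D S) (rep A + rep B)"
definition "hp_zero sc D S = qcl (par_ideal sc D S) 0"
definition "hp_sc sc D S c A = qcl (par_ideal sc D S) (tsc c (rep A))"
definition "hp_mul sc D S A B = qcl (par_ideal sc D S) (tmul (rep A) (rep B))"
definition "hp_one sc D S = qcl (par_ideal sc D S) tone"
definition "brk sc D S h = qcl (par_ideal sc D S) (gen h)"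

text \<open>The left H_par-module structure of a partial module: [h1]...[hn] m = pi h1 (... (pi hn m)).\<close>
definition word_act :: "('h \<Rightarrow> 'm \<Rightarrow> 'm) \<Rightarrow> 'h list \<Rightarrow> 'm \<Rightarrow> 'm" where
  "word_act \<pi> w = foldr (\<lambda>h f. \<pi> h \<circ> f) w id"
definition teval :: "('k::field \<Rightarrow> 'm::ab_group_add \<Rightarrow> 'm) \<Rightarrow> ('h \<Rightarrow> 'm \<Rightarrow> 'm) \<Rightarrow> ('h list \<Rightarrow>\<^sub>0 'k) \<Rightarrow> 'm \<Rightarrow> 'm" where
  "teval scM \<pi> p m = (\<Sum>w\<in>Poly_Mapping.keys p. scM (Poly_Mapping.lookup p w) (word_act \<pi> w m))"
definition hp_act :: "('k::field \<Rightarrow> 'm::ab_group_add \<Rightarrow> 'm) \<Rightarrow> ('h \<Rightarrow> 'm \<Rightarrow> 'm) \<Rightarrow> ('h, 'k) hpar \<Rightarrow> 'm \<Rightarrow> 'm" where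
  "hp_act scM \<pi> A m = teval scM \<pi> (rep A) m"

definition "phi sc D S x = (\<lambda>h. hp_mul sc D S (brk sc D S h) x)"
definition hom_act :: "'h::ring_1 \<Rightarrow> ('h \<Rightarrow> 'b) \<Rightarrow> ('h \<Rightarrow> 'b)" where
  "hom_act h f = (\<lambda>k. f (k * h))"
definition "fadd sc D S f g = (\<lambda>k. hp_add sc D S (f k) (g k))"
definition "fzero sc D S = (\<lambda>k::'h. hp_zero sc D S)"
definition "fsc sc D S c f = (\<lambda>k. hp_sc sc D S c (f k))"

text \<open>bsum [(h_i, x_i)] = \<Sum>_i h_i \<triangleright> \<phi>(x_i).\<close>
definition "bsum sc D S l = csum (fadd sc D S) (fzero sc D S) (map (\<lambda>(h, x). hom_act h (phi sc D S x)) l)"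
definition "bvalid sc D S l \<longleftrightarrow> set l \<subseteq> UNIV \<times> hp_carrier sc D S"

definition Hbar where
  "Hbar sc D S = {bsum sc D S l | l. bvalid sc D S l}"

text \<open>Right H_par-action from (i): (\<Sum>_i h_i \<triangleright> \<phi>(x_i)) \<triangleleft> y = \<Sum>_i h_i \<triangleright> \<phi>(x_i y).\<close>
definition "rmul_list sc D S l y = map (\<lambda>(h, x). (h, hp_mul sc D S x y)) l"
definition "ract sc D S f y =
   bsum sc D S (rmul_list sc D S (SOME l. bvalid sc D S l \<and> bsum sc D S l = f) y)"

section \<open>The secondary dilation: Hbar (x)_{H_par} M\<close>

definition "etn f m = Poly_Mapping.single (f, m) (1::'k::field)"

definition ten_rels where
  "ten_rels sc D S scM \<pi> =
     {etn (fadd sc D S f g) m - etn f m - etn g m | f g m. f \<in> Hbar sc D S \<and> g \<in> Hbar sc D S} \<union>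
     {etn f (m + m') - etn f m - etn f m' | f m m'. f \<in> Hbar sc D S} \<union>
     {etn (fsc sc D S c f) m - tsc c (etn f m) | c f m. f \<in> Hbar sc D S} \<union>
     {etn f (scM c m) - tsc c (etn f m) | c f m. f \<in> Hbar sc D S} \<union>
     {etn (ract sc D S f y) m - etn f (hp_act scM \<pi> y m) | f y m.
        f \<in> Hbar sc D S \<and> y \<in> hp_carrier sc D S}"

definition "ten_W sc D S scM \<pi> = fspan (ten_rels sc D S scM \<pi>)"

definition "Nsec sc D S scM \<pi> = {qcl (ten_W sc D S scM \<pi>) p | p. Poly_Mapping.keys p \<subseteq> Hbar sc D S \<times> UNIV}"
definition "nadd sc D S scM \<pi> A B = qcl (ten_W sc D S scM \<pi>) (rep A + rep B)"
definition "nzero sc D S scM \<pi> = qcl (ten_W sc D S scM \<pi>) 0"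
definition "nsc sc D S scM \<pi> c A = qcl (ten_W sc D S scM \<pi>) (tsc c (rep A))"
text \<open>h \<triangleright> (f (x) m) = (h \<triangleright> f) (x) m.\<close>
definition "nact sc D S scM \<pi> h A =
   qcl (ten_W sc D S scM \<pi>) (pmmap (\<lambda>(f, m). (hom_act h f, m)) (rep A))"
text \<open>T (f (x) m) = \<phi>(1) (x) f(1_H) m.\<close>
definition "Tsec sc D S scM \<pi> A =
   qcl (ten_W sc D S scM \<pi>)
     (pmmap (\<lambda>(f, m). (phi sc D S (hp_one sc D S), hp_act scM \<pi> (f 1) m)) (rep A))"
text \<open>\<phi>(m) = \<phi>(1) (x) m.\<close>
definition "phisec sc D S scM \<pi> m = qcl (ten_W sc D S scM \<pi>) (etn (phi sc D S (hp_one sc D S)) m)"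

end

(*
  H_par is the quotient of the tensor algebra by the ideal of the partial relations; evaluating
  words on M kills that ideal, so M is an H_par-module.  An element sum_i h_i |> phi(x_i) of Hbar is
  the function k |-> sum_i [k h_i] x_i, hence right multiplication by y in H_par can be performed pointwise,
  which makes the bimodule structure well defined.

  On the tensor product, the contraction f (x) m |-> f(1) m kills the balancing relations and
  T = theta o contraction with theta(m) = phi(1) (x) m; since the contraction inverts theta, T is an
  idempotent with image theta(M), on which the induced action is pi transported along theta.
  Writing eps_h = [h_(1)][S h_(2)], the partial relations give both
  sum h_(1) |> T(S h_(2) |> T x) = theta(eps_h . f(1) m) and T(T_h x) = theta(eps_h . f(1) m) on
  x = f (x) m, which is the c-condition.  Finally f (x) m = sum_i (h_i |> phi(1)) (x) x_i m for
  f = sum_i h_i |> phi(x_i), so the dilation is proper.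
*)
theory Submission
  imports Defs "HOL.Modules"
begin

lemma sum_list_sum_swap: "(\<Sum>i\<leftarrow>l. \<Sum>k\<in>A. G i k) = (\<Sum>k\<in>A. \<Sum>i\<leftarrow>l. (G i k :: 'a::comm_monoid_add))"
  by (induction l) (simp_all add: sum.distrib)

lemma (in module_hom) sum_list_map: "f (\<Sum>x\<leftarrow>xs. g x) = (\<Sum>x\<leftarrow>xs. f (g x))"
  by (induction xs) (simp_all add: add)

section \<open>Free vector spaces\<close>

lemma lookup_tsc [simp]: "Poly_Mapping.lookup (tsc c p) k = c * Poly_Mapping.lookup p k"
  unfolding tsc_def by transfer (simp add: when_def)

lemma tsc_module: "module (tsc :: 'k::field \<Rightarrow> ('a \<Rightarrow>\<^sub>0 'k) \<Rightarrow> ('a \<Rightarrow>\<^sub>0 'k))"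
  by unfold_locales (auto intro!: poly_mapping_eqI simp: lookup_add algebra_simps)

interpretation fvs: module "tsc :: 'k::field \<Rightarrow> ('a \<Rightarrow>\<^sub>0 'k) \<Rightarrow> ('a \<Rightarrow>\<^sub>0 'k)"
  by (rule tsc_module)

interpretation fvs_pair: module_pair "tsc :: 'k::field \<Rightarrow> ('a \<Rightarrow>\<^sub>0 'k) \<Rightarrow> ('a \<Rightarrow>\<^sub>0 'k)"
  "tsc :: 'k::field \<Rightarrow> ('b \<Rightarrow>\<^sub>0 'k) \<Rightarrow> ('b \<Rightarrow>\<^sub>0 'k)"
  by unfold_locales

lemma fspan_eq_span: "fspan X = fvs.span X"
  by (simp add: fspan_def fvs.span_explicit)

lemma keys_tsc: "Poly_Mapping.keys (tsc c p) \<subseteq> Poly_Mapping.keys p"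
  by (auto simp: in_keys_iff)

lemma tsc_single: "tsc c (Poly_Mapping.single k v) = Poly_Mapping.single k (c * v)"
  by (rule poly_mapping_eqI) (simp add: lookup_single when_def)

lemma pm_expand: "p = (\<Sum>k\<in>Poly_Mapping.keys p. tsc (Poly_Mapping.lookup p k) (Poly_Mapping.single k 1))"
  by (rule poly_mapping_eqI) (simp add: lookup_sum lookup_single when_def in_keys_iff tsc_single)

definition lin_ext :: "('k::zero \<Rightarrow> 'b \<Rightarrow> 'b) \<Rightarrow> ('a \<Rightarrow> 'b::comm_monoid_add) \<Rightarrow> ('a \<Rightarrow>\<^sub>0 'k) \<Rightarrow> 'b" where
  "lin_ext s G p = (\<Sum>k\<in>Poly_Mapping.keys p. s (Poly_Mapping.lookup p k) (G k))"

lemma lin_ext_superset: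
  assumes "module s" "finite A" "Poly_Mapping.keys p \<subseteq> A"
  shows "lin_ext s G p = (\<Sum>k\<in>A. s (Poly_Mapping.lookup p k) (G k))"
  unfolding lin_ext_def using assms
  by (intro sum.mono_neutral_left) (auto simp: in_keys_iff module.scale_zero_left)

lemma module_hom_lin_ext:
  fixes s :: "'k::field \<Rightarrow> 'b::ab_group_add \<Rightarrow> 'b"
  assumes "module s"
  shows "module_hom tsc s (lin_ext s G)"
proof -
  have add: "lin_ext s G (p + q) = lin_ext s G p + lin_ext s G q" for p q
  proof -
    let ?A = "Poly_Mapping.keys p \<union> Poly_Mapping.keys q"
    have "Poly_Mapping.keys (p + q) \<subseteq> ?A" by (rule keys_add)
    then show ?thesis
      using assms by (simp add: lin_ext_superset[of s ?A] lookup_add module.scale_left_distrib sum.distrib)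
  qed
  have "lin_ext s G (tsc c p) = s c (lin_ext s G p)" for c p
  proof -
    have "lin_ext s G (tsc c p) = (\<Sum>k\<in>Poly_Mapping.keys p. s (c * Poly_Mapping.lookup p k) (G k))"
      using assms keys_tsc[of c p] by (simp add: lin_ext_superset[of s "Poly_Mapping.keys p"])
    also have "\<dots> = s c (lin_ext s G p)"
      using assms by (simp add: lin_ext_def module.scale_sum_right module.scale_scale)
    finally show ?thesis .
  qed
  with add show ?thesis
    by (simp add: module_hom_iff tsc_module assms)
qed

lemma lin_ext_single: "module s \<Longrightarrow> lin_ext s G (Poly_Mapping.single k c) = s c (G k)"
  by (cases "c = 0") (simp_all add: lin_ext_def module.scale_zero_left)

lemma module_hom_expand:
  assumes "module_hom tsc s L"
  shows "L p = (\<Sum>k\<in>Poly_Mapping.keys p. s (Poly_Mapping.lookup p k) (L (Poly_Mapping.single k 1)))"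
proof -
  interpret module_hom tsc s L by fact
  show ?thesis by (subst pm_expand) (simp add: sum scale)
qed

lemma module_hom_eqI:
  assumes "module_hom tsc s L" "module_hom tsc s L'"
    and "\<And>k. k \<in> Poly_Mapping.keys p \<Longrightarrow> L (Poly_Mapping.single k 1) = L' (Poly_Mapping.single k 1)"
  shows "L p = L' p"
  unfolding module_hom_expand[OF assms(1), of p] module_hom_expand[OF assms(2), of p]
  using assms(3) by simp

lemma module_hom_span_image:
  assumes "module_hom tsc tsc L" "\<And>r. r \<in> X \<Longrightarrow> L r \<in> fvs.span Y" "p \<in> fvs.span X"
  shows "L p \<in> fvs.span Y"
  using assms(3)
proof (induction rule: fvs.span_induct_alt)
  case (step c x y)
  interpret module_hom tsc tsc L by fact
  show ?case using step assms(2) by (simp add: add scale fvs.span_add fvs.span_scale)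
qed (simp add: module_hom.zero[OF assms(1)] fvs.span_zero)

lemma module_hom_diff_in_span:
  assumes "module_hom tsc tsc L" "module_hom tsc tsc L'"
    and "\<And>k. k \<in> Poly_Mapping.keys p \<Longrightarrow>
       L (Poly_Mapping.single k 1) - L' (Poly_Mapping.single k 1) \<in> fvs.span Y"
  shows "L p - L' p \<in> fvs.span Y"
proof -
  have "L p - L' p = (\<Sum>k\<in>Poly_Mapping.keys p. tsc (Poly_Mapping.lookup p k)
         (L (Poly_Mapping.single k 1) - L' (Poly_Mapping.single k 1)))"
    unfolding module_hom_expand[OF assms(1), of p] module_hom_expand[OF assms(2), of p]
    by (simp add: fvs.scale_right_diff_distrib sum_subtractf)
  also have "\<dots> \<in> fvs.span Y"
    by (intro fvs.span_sum fvs.span_scale assms(3))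
  finally show ?thesis .
qed

lemma pmmap_lin_ext: "pmmap g = lin_ext tsc (\<lambda>k. Poly_Mapping.single (g k) 1)"
  by (simp add: fun_eq_iff pmmap_def lin_ext_def tsc_single)

lemma module_hom_pmmap: "module_hom tsc tsc (pmmap g)"
  unfolding pmmap_lin_ext by (rule module_hom_lin_ext[OF tsc_module])

interpretation pmmap: module_hom tsc tsc "pmmap g" for g
  by (rule module_hom_pmmap)

lemma pmmap_single [simp]: "pmmap g (Poly_Mapping.single k c) = Poly_Mapping.single (g k) c"
  by (simp add: pmmap_lin_ext lin_ext_single[OF tsc_module] tsc_single)

lemma pmmap_comp: "pmmap g (pmmap g' p) = pmmap (g \<circ> g') p"
proof (rule module_hom_eqI[where s = tsc and L = "\<lambda>p. pmmap g (pmmap g' p)"])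
  show "module_hom tsc tsc (\<lambda>p. pmmap g (pmmap g' p))"
    using module_hom_compose[OF module_hom_pmmap module_hom_pmmap] by (simp add: comp_def)
qed (simp_all add: module_hom_pmmap)

lemma pmmap_id: "pmmap (\<lambda>x. x) p = p"
  by (rule module_hom_eqI[where s = tsc]) (simp_all add: module_hom_pmmap fvs.module_hom_ident)

lemma keys_pmmap: "Poly_Mapping.keys (pmmap g p) \<subseteq> g ` Poly_Mapping.keys p"
proof -
  have "Poly_Mapping.keys (pmmap g p) \<subseteq>
      (\<Union>k\<in>Poly_Mapping.keys p. Poly_Mapping.keys (Poly_Mapping.single (g k) (Poly_Mapping.lookup p k)))"
    unfolding pmmap_def by (rule keys_sum)
  also have "\<dots> \<subseteq> g ` Poly_Mapping.keys p" by auto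
  finally show ?thesis .
qed

lemma qcl_eq_iff: "qcl (fvs.span X) p = qcl (fvs.span X) q \<longleftrightarrow> p - q \<in> fvs.span X"
proof
  assume "qcl (fvs.span X) p = qcl (fvs.span X) q"
  moreover have "p \<in> qcl (fvs.span X) p" by (simp add: qcl_def fvs.span_zero)
  ultimately show "p - q \<in> fvs.span X" by (simp add: qcl_def)
next
  assume "p - q \<in> fvs.span X"
  then have "y - p \<in> fvs.span X \<longleftrightarrow> y - q \<in> fvs.span X" for y
    using fvs.span_add[of "y - p" X "p - q"] fvs.span_diff[of "y - q" X "p - q"] by auto
  then show "qcl (fvs.span X) p = qcl (fvs.span X) q" by (auto simp: qcl_def)
qed

lemma rep_qcl: "rep (qcl (fvs.span X) p) - p \<in> fvs.span X"
proof -
  have "p \<in> qcl (fvs.span X) p" by (simp add: qcl_def fvs.span_zero)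
  then have "rep (qcl (fvs.span X) p) \<in> qcl (fvs.span X) p" unfolding rep_def by (rule someI)
  then show ?thesis by (simp add: qcl_def)
qed

lemma qcl_rep [simp]: "qcl (fvs.span X) (rep (qcl (fvs.span X) p)) = qcl (fvs.span X) p"
  using rep_qcl qcl_eq_iff by blast

lemma qcl_add_rep: "qcl (fvs.span X) (rep (qcl (fvs.span X) p) + rep (qcl (fvs.span X) q)) = qcl (fvs.span X) (p + q)"
proof -
  have "(rep (qcl (fvs.span X) p) - p) + (rep (qcl (fvs.span X) q) - q) \<in> fvs.span X"
    by (intro fvs.span_add rep_qcl)
  then show ?thesis by (simp add: qcl_eq_iff algebra_simps)
qed

lemma qcl_hom_rep:
  assumes "module_hom tsc tsc L" "\<And>r. r \<in> X \<Longrightarrow> L r \<in> fvs.span Y"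
  shows "qcl (fvs.span Y) (L (rep (qcl (fvs.span X) p))) = qcl (fvs.span Y) (L p)"
proof -
  have "L (rep (qcl (fvs.span X) p) - p) \<in> fvs.span Y"
    by (rule module_hom_span_image[OF assms rep_qcl])
  then show ?thesis by (simp add: qcl_eq_iff module_hom.diff[OF assms(1)])
qed

lemma qcl_tsc_rep: "qcl (fvs.span X) (tsc c (rep (qcl (fvs.span X) p))) = qcl (fvs.span X) (tsc c p)"
  by (rule qcl_hom_rep) (simp_all add: fvs.span_scale fvs.span_base)

section \<open>The tensor algebra\<close>

lemma tmul_lin_ext:
  "tmul p q = lin_ext tsc (\<lambda>u. lin_ext tsc (\<lambda>v. Poly_Mapping.single (u @ v) 1) q) p"
  by (simp add: tmul_def lin_ext_def fvs.scale_sum_right tsc_single mult.commute)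

lemma module_hom_tmul_left: "module_hom tsc tsc (\<lambda>p. tmul p q)"
  unfolding tmul_lin_ext by (rule module_hom_lin_ext[OF tsc_module])

lemma module_hom_tmul_right:
  fixes p :: "'a list \<Rightarrow>\<^sub>0 'k::field"
  shows "module_hom tsc tsc (tmul p)"
proof -
  let ?L = "\<lambda>u. lin_ext tsc (\<lambda>v. Poly_Mapping.single (u @ v) (1::'k))"
  have L: "module_hom tsc tsc (?L u)" for u by (rule module_hom_lin_ext[OF tsc_module])
  have e: "tmul p q = (\<Sum>u\<in>Poly_Mapping.keys p. tsc (Poly_Mapping.lookup p u) (?L u q))" for q
    by (simp add: tmul_lin_ext lin_ext_def)
  show ?thesis
    by (simp add: module_hom_iff tsc_module e module_hom.add[OF L] module_hom.scale[OF L]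
        fvs.scale_right_distrib sum.distrib fvs.scale_sum_right fvs.scale_left_commute mult.commute)
qed

interpretation tmul_left: module_hom tsc tsc "\<lambda>p. tmul p q" for q
  by (rule module_hom_tmul_left)

interpretation tmul_right: module_hom tsc tsc "tmul p" for p
  by (rule module_hom_tmul_right)

lemma tmul_single: "tmul (Poly_Mapping.single u a) (Poly_Mapping.single v b) = Poly_Mapping.single (u @ v) (a * b)"
  by (simp add: tmul_lin_ext lin_ext_single[OF tsc_module] tsc_single)

lemma tmul_assoc: "tmul (tmul p q) r = tmul p (tmul q r)"
proof (rule module_hom_eqI[where s = tsc and L = "\<lambda>p. tmul (tmul p q) r"])
  show "module_hom tsc tsc (\<lambda>p. tmul (tmul p q) r)"
    using module_hom_compose[OF module_hom_tmul_left module_hom_tmul_left] by (simp add: comp_def)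
  fix u
  show "tmul (tmul (Poly_Mapping.single u 1) q) r = tmul (Poly_Mapping.single u 1) (tmul q r)"
  proof (rule module_hom_eqI[where s = tsc and L = "\<lambda>q. tmul (tmul (Poly_Mapping.single u 1) q) r"])
    show "module_hom tsc tsc (\<lambda>q. tmul (tmul (Poly_Mapping.single u 1) q) r)"
      using module_hom_compose[OF module_hom_tmul_right module_hom_tmul_left] by (simp add: comp_def)
    show "module_hom tsc tsc (\<lambda>q. tmul (Poly_Mapping.single u 1) (tmul q r))"
      using module_hom_compose[OF module_hom_tmul_left module_hom_tmul_right] by (simp add: comp_def)
    fix v
    show "tmul (tmul (Poly_Mapping.single u 1) (Poly_Mapping.single v 1)) r =
          tmul (Poly_Mapping.single u 1) (tmul (Poly_Mapping.single v 1) r)"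
    proof (rule module_hom_eqI[where s = tsc and L = "tmul (tmul (Poly_Mapping.single u 1) (Poly_Mapping.single v 1))"])
      show "module_hom tsc tsc (\<lambda>r. tmul (Poly_Mapping.single u 1) (tmul (Poly_Mapping.single v 1) r))"
        using module_hom_compose[OF module_hom_tmul_right module_hom_tmul_right] by (simp add: comp_def)
    qed (simp_all add: tmul_single module_hom_tmul_right)
  qed
qed (simp add: module_hom_tmul_left)

lemma tmul_tone_left [simp]: "tmul tone p = p"
  by (rule module_hom_eqI[where s = tsc and L = "tmul tone"])
    (simp_all add: module_hom_tmul_right fvs.module_hom_ident tone_def tmul_single)

lemma tmul_tone_right [simp]: "tmul p tone = p"
  by (rule module_hom_eqI[where s = tsc and L = "\<lambda>p. tmul p tone"])
    (simp_all add: module_hom_tmul_left fvs.module_hom_ident tone_def tmul_single)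

section \<open>The algebra \<open>H\<^sub>p\<^sub>a\<^sub>r\<close>\<close>

definition par_ideal_gens :: "('k::field \<Rightarrow> 'h::ring_1 \<Rightarrow> 'h) \<Rightarrow> ('h \<Rightarrow> ('h \<times> 'h) list) \<Rightarrow> ('h \<Rightarrow> 'h)
   \<Rightarrow> ('h list \<Rightarrow>\<^sub>0 'k) set" where
  "par_ideal_gens sc D S = {tmul (tmul u r) v | u r v. r \<in> par_rels sc D S}"

locale hpar =
  fixes sc :: "'k::field \<Rightarrow> 'h::ring_1 \<Rightarrow> 'h" and D :: "'h \<Rightarrow> ('h \<times> 'h) list" and S :: "'h \<Rightarrow> 'h"
  assumes sc_mult_left: "\<And>c x y. sc c (x * y) = sc c x * y"
    and sc_mult_right: "\<And>c x y. sc c (x * y) = x * sc c y"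
begin

abbreviation "I \<equiv> fvs.span (par_ideal_gens sc D S)"
abbreviation "Q \<equiv> qcl I"
abbreviation "Hp \<equiv> hp_carrier sc D S"

lemma par_ideal_eq: "par_ideal sc D S = I"
  by (simp add: par_ideal_def par_ideal_gens_def fspan_eq_span)

lemma ideal_mult_left: "p \<in> I \<Longrightarrow> tmul q p \<in> I"
proof (rule module_hom_span_image[OF module_hom_tmul_right])
  fix r assume "r \<in> par_ideal_gens sc D S"
  then obtain u r0 v where "r = tmul (tmul u r0) v" "r0 \<in> par_rels sc D S"
    by (auto simp: par_ideal_gens_def)
  then have "tmul q r = tmul (tmul (tmul q u) r0) v" by (simp add: tmul_assoc)
  with \<open>r0 \<in> par_rels sc D S\<close> show "tmul q r \<in> I"
    by (intro fvs.span_base) (auto simp: par_ideal_gens_def)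
qed

lemma ideal_mult_right: "p \<in> I \<Longrightarrow> tmul p q \<in> I"
proof (rule module_hom_span_image[OF module_hom_tmul_left])
  fix r assume "r \<in> par_ideal_gens sc D S"
  then obtain u r0 v where "r = tmul (tmul u r0) v" "r0 \<in> par_rels sc D S"
    by (auto simp: par_ideal_gens_def)
  then have "tmul r q = tmul (tmul u r0) (tmul v q)" by (simp add: tmul_assoc)
  with \<open>r0 \<in> par_rels sc D S\<close> show "tmul r q \<in> I"
    by (intro fvs.span_base) (auto simp: par_ideal_gens_def)
qed

lemma par_rels_in_ideal: "r \<in> par_rels sc D S \<Longrightarrow> r \<in> I"
  by (rule fvs.span_base) (metis (mono_tags, lifting) par_ideal_gens_def mem_Collect_eq tmul_tone_left tmul_tone_right)

lemma Q_eqI: "p - q \<in> I \<Longrightarrow> Q p = Q q"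
  by (simp add: qcl_eq_iff)

lemma hp_add_Q: "hp_add sc D S (Q p) (Q q) = Q (p + q)"
  by (simp add: hp_add_def par_ideal_eq qcl_add_rep)

lemma hp_sc_Q: "hp_sc sc D S c (Q p) = Q (tsc c p)"
  by (simp add: hp_sc_def par_ideal_eq qcl_tsc_rep)

lemma hp_mul_Q: "hp_mul sc D S (Q p) (Q q) = Q (tmul p q)"
proof -
  let ?a = "rep (Q p)" and ?b = "rep (Q q)"
  have "tmul ?a ?b - tmul p q = tmul (?a - p) ?b + tmul p (?b - q)"
    by (simp add: tmul_left.diff tmul_right.diff)
  also have "\<dots> \<in> I"
    by (intro fvs.span_add ideal_mult_left ideal_mult_right rep_qcl)
  finally show ?thesis by (simp add: hp_mul_def par_ideal_eq qcl_eq_iff)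
qed

lemma hp_zero_eq: "hp_zero sc D S = Q 0" by (simp add: hp_zero_def par_ideal_eq)
lemma hp_one_eq: "hp_one sc D S = Q tone" by (simp add: hp_one_def par_ideal_eq)
lemma brk_eq: "brk sc D S h = Q (gen h)" by (simp add: brk_def par_ideal_eq)
lemma hp_carrier_eq: "Hp = range Q" by (simp add: hp_carrier_def par_ideal_eq)
lemma Q_in_Hp [simp]: "Q p \<in> Hp" by (simp add: hp_carrier_eq)
lemma Q_rep: "x \<in> Hp \<Longrightarrow> Q (rep x) = x" by (auto simp: hp_carrier_eq)

lemma Q_cong_add: "Q p = Q p' \<Longrightarrow> Q q = Q q' \<Longrightarrow> Q (p + q) = Q (p' + q')"
  using hp_add_Q[of p q] hp_add_Q[of p' q'] by simp

lemma Q_cong_mul: "Q p = Q p' \<Longrightarrow> Q q = Q q' \<Longrightarrow> Q (tmul p q) = Q (tmul p' q')"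
  using hp_mul_Q[of p q] hp_mul_Q[of p' q'] by simp

lemma Q_gen_add: "Q (gen (x + y)) = Q (gen x + gen y)"
proof (rule Q_eqI)
  have "gen (x + y) - gen x - gen y \<in> par_rels sc D S" unfolding par_rels_def by blast
  then show "gen (x + y) - (gen x + gen y) \<in> I" by (simp add: par_rels_in_ideal diff_diff_eq)
qed

lemma Q_gen_sc: "Q (gen (sc c x)) = Q (tsc c (gen x))"
  by (rule Q_eqI, rule par_rels_in_ideal) (unfold par_rels_def, blast)

lemma Q_absorb_left:
  "Q (\<Sum>(a,b)\<leftarrow>D k. tmul (tmul (gen h) (gen a)) (gen (S b))) = Q (\<Sum>(a,b)\<leftarrow>D k. tmul (gen (h * a)) (gen (S b)))"
  by (rule Q_eqI, rule par_rels_in_ideal) (unfold par_rels_def, blast)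

lemma Q_absorb_right:
  "Q (\<Sum>(a,b)\<leftarrow>D h. tmul (tmul (gen a) (gen (S b))) (gen k)) = Q (\<Sum>(a,b)\<leftarrow>D h. tmul (gen a) (gen (S b * k)))"
  by (rule Q_eqI, rule par_rels_in_ideal) (unfold par_rels_def, blast)

section \<open>The \<open>H\<close>-\<open>H\<^sub>p\<^sub>a\<^sub>r\<close>-bimodule \<open>Hbar\<close>\<close>

abbreviation "Hb \<equiv> Hbar sc D S"

lemma Q_cong_sum_list:
  "(\<And>i. i \<in> set l \<Longrightarrow> Q (f i) = Q (g i)) \<Longrightarrow> Q (\<Sum>i\<leftarrow>l. f i) = Q (\<Sum>i\<leftarrow>l. g i)"
proof (induction l)
  case (Cons a l)
  then show ?case using Q_cong_add[of "f a" "g a"] by simp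
qed simp

lemma Q_rep_hp_mul: "x \<in> Hp \<Longrightarrow> y \<in> Hp \<Longrightarrow> Q (rep (hp_mul sc D S x y)) = Q (tmul (rep x) (rep y))"
  by (metis Q_rep hp_mul_Q qcl_rep)

lemma Q_rep_hp_sc: "x \<in> Hp \<Longrightarrow> Q (rep (hp_sc sc D S c x)) = Q (tsc c (rep x))"
  by (metis Q_rep hp_sc_Q qcl_rep)

lemma hp_mul_rep: "x \<in> Hp \<Longrightarrow> hp_mul sc D S (Q p) x = Q (tmul p (rep x))"
  using hp_mul_Q[of p "rep x"] by (simp add: Q_rep)

lemma phi_Q: "phi sc D S (Q q) k = Q (tmul (gen k) q)"
  by (simp add: phi_def brk_eq hp_mul_Q)

text \<open>The value at \<open>k\<close> of \<open>\<Sum>\<^sub>i h\<^sub>i \<triangleright> \<phi>(x\<^sub>i)\<close> is the class of \<open>\<Sum>\<^sub>i [k h\<^sub>i] x\<^sub>i\<close>.\<close>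
definition bsum_rep :: "('h \<times> ('h, 'k) hpar) list \<Rightarrow> 'h \<Rightarrow> ('h list \<Rightarrow>\<^sub>0 'k)" where
  "bsum_rep l k = (\<Sum>(h,x)\<leftarrow>l. tmul (gen (k * h)) (rep x))"

lemma bvalid_Nil [simp]: "bvalid sc D S []"
  by (simp add: bvalid_def)

lemma bvalid_Cons [simp]: "bvalid sc D S ((h,x) # l) \<longleftrightarrow> x \<in> Hp \<and> bvalid sc D S l"
  by (auto simp: bvalid_def)

lemma bsum_Nil: "bsum sc D S [] = fzero sc D S"
  by (simp add: bsum_def csum_def)

lemma bsum_Cons: "bsum sc D S ((h,x) # l) = fadd sc D S (hom_act h (phi sc D S x)) (bsum sc D S l)"
  by (simp add: bsum_def csum_def)

lemma bsum_eq: "bvalid sc D S l \<Longrightarrow> bsum sc D S l k = Q (bsum_rep l k)"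
proof (induction l arbitrary: k)
  case (Cons a l)
  obtain h x where a: "a = (h, x)" by force
  with Cons have "x \<in> Hp" "bvalid sc D S l" by auto
  then show ?case
    using Cons.IH by (simp add: a bsum_Cons fadd_def hom_act_def phi_def brk_eq hp_mul_rep hp_add_Q bsum_rep_def)
qed (simp add: bsum_Nil fzero_def hp_zero_eq bsum_rep_def)

lemma Hbar_iff: "f \<in> Hb \<longleftrightarrow> (\<exists>l. bvalid sc D S l \<and> f = bsum sc D S l)"
  by (auto simp: Hbar_def)

lemma Hbar_apply_in: "f \<in> Hb \<Longrightarrow> f k \<in> Hp"
  by (auto simp: Hbar_iff bsum_eq)

lemma Hbar_Q_form:
  assumes "f \<in> Hb"
  obtains F where "f = (\<lambda>k. Q (F k))"
  using assms by (intro that[of "\<lambda>k. rep (f k)"]) (simp add: fun_eq_iff Q_rep Hbar_apply_in)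

lemma Hp_Q_form:
  assumes "y \<in> Hp"
  obtains a where "y = Q a"
  using assms by (auto simp: hp_carrier_eq)

lemma fadd_Q: "fadd sc D S (\<lambda>k. Q (F k)) (\<lambda>k. Q (G k)) = (\<lambda>k. Q (F k + G k))"
  by (simp add: fadd_def hp_add_Q)

lemma fsc_Q: "fsc sc D S c (\<lambda>k. Q (F k)) = (\<lambda>k. Q (tsc c (F k)))"
  by (simp add: fsc_def hp_sc_Q)

lemma fzero_Q: "fzero sc D S = (\<lambda>k. Q 0)"
  by (simp add: fzero_def hp_zero_eq)

lemma fzero_in_Hbar: "fzero sc D S \<in> Hb"
  using Hbar_iff bsum_Nil bvalid_Nil by metis

lemma fadd_in_Hbar:
  assumes "f \<in> Hb" "g \<in> Hb"
  shows "fadd sc D S f g \<in> Hb"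
proof -
  obtain l l' where "bvalid sc D S l" "f = bsum sc D S l" "bvalid sc D S l'" "g = bsum sc D S l'"
    using assms by (auto simp: Hbar_iff)
  then have "bvalid sc D S (l @ l') \<and> fadd sc D S f g = bsum sc D S (l @ l')"
    by (auto simp: bvalid_def fadd_def bsum_eq hp_add_Q bsum_rep_def)
  then show ?thesis by (auto simp: Hbar_iff)
qed

lemma fsc_in_Hbar:
  assumes "f \<in> Hb"
  shows "fsc sc D S c f \<in> Hb"
proof -
  obtain l where l: "bvalid sc D S l" "f = bsum sc D S l" using assms by (auto simp: Hbar_iff)
  let ?l = "map (\<lambda>(h,x). (h, hp_sc sc D S c x)) l"
  have v: "bvalid sc D S ?l" by (auto simp: bvalid_def hp_carrier_def hp_sc_def)
  have "Q (tsc c (bsum_rep l k)) = Q (bsum_rep ?l k)" for k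
    unfolding bsum_rep_def fvs.module_hom_scale_self[THEN module_hom.sum_list_map] map_map
  proof (rule Q_cong_sum_list)
    fix i assume "i \<in> set l"
    moreover obtain h x where "i = (h, x)" by force
    ultimately have "x \<in> Hp" using l(1) by (auto simp: bvalid_def)
    then show "Q (tsc c (case i of (h, x) \<Rightarrow> tmul (gen (k * h)) (rep x))) =
      Q (((\<lambda>(h, x). tmul (gen (k * h)) (rep x)) \<circ> (\<lambda>(h, x). (h, hp_sc sc D S c x))) i)"
      using Q_cong_mul[OF refl Q_rep_hp_sc[OF \<open>x \<in> Hp\<close>, symmetric], where p = "gen (k * h)"]
      by (simp add: \<open>i = (h, x)\<close> tmul_right.scale)
  qed
  with l v have "fsc sc D S c f = bsum sc D S ?l"
    by (simp add: fun_eq_iff fsc_def bsum_eq hp_sc_Q)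
  with v show ?thesis by (auto simp: Hbar_iff)
qed

lemma hom_act_bsum: "hom_act h (bsum sc D S l) = bsum sc D S (map (\<lambda>(h',x). (h * h', x)) l)"
proof (induction l)
  case (Cons a l)
  then show ?case
    by (cases a) (simp add: bsum_Cons fun_eq_iff fadd_def hom_act_def mult.assoc)
qed (simp add: bsum_Nil hom_act_def fzero_def)

lemma hom_act_in_Hbar: "f \<in> Hb \<Longrightarrow> hom_act h f \<in> Hb"
proof -
  assume "f \<in> Hb"
  then obtain l where "bvalid sc D S l" "f = bsum sc D S l" by (auto simp: Hbar_iff)
  moreover have "bvalid sc D S l \<Longrightarrow> bvalid sc D S (map (\<lambda>(h',x). (h * h', x)) l)"
    by (auto simp: bvalid_def)
  ultimately have "bvalid sc D S (map (\<lambda>(h',x). (h * h', x)) l) \<and>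
      hom_act h f = bsum sc D S (map (\<lambda>(h',x). (h * h', x)) l)"
    by (simp add: hom_act_bsum)
  then show ?thesis unfolding Hbar_iff by (rule exI)
qed

lemma phi_eq_bsum: "x \<in> Hp \<Longrightarrow> phi sc D S x = bsum sc D S [(1, x)]"
  by (rule ext) (simp add: bsum_eq bsum_rep_def phi_def brk_eq hp_mul_rep)

lemma phi_in_Hbar: "x \<in> Hp \<Longrightarrow> phi sc D S x \<in> Hb"
  unfolding Hbar_iff using phi_eq_bsum[of x] by (intro exI[of _ "[(1, x)]"]) simp

lemma bvalid_rmul_list: "bvalid sc D S (rmul_list sc D S l y)"
  by (auto simp: bvalid_def rmul_list_def hp_carrier_def hp_mul_def)

lemma bsum_rmul_list:
  assumes "bvalid sc D S l" "y \<in> Hp"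
  shows "bsum sc D S (rmul_list sc D S l y) k = hp_mul sc D S (bsum sc D S l k) y"
proof -
  have "Q (bsum_rep (rmul_list sc D S l y) k) = Q (tmul (bsum_rep l k) (rep y))"
    unfolding bsum_rep_def rmul_list_def tmul_left.sum_list_map map_map
  proof (rule Q_cong_sum_list)
    fix i assume "i \<in> set l"
    moreover obtain h x where "i = (h, x)" by force
    ultimately have "x \<in> Hp" using assms(1) by (auto simp: bvalid_def)
    then show "Q (((\<lambda>(h, x). tmul (gen (k * h)) (rep x)) \<circ> (\<lambda>(h, x). (h, hp_mul sc D S x y))) i) =
      Q (tmul (case i of (h, x) \<Rightarrow> tmul (gen (k * h)) (rep x)) (rep y))"
      using Q_cong_mul[OF refl Q_rep_hp_mul[OF \<open>x \<in> Hp\<close> assms(2)], where p = "gen (k * h)"]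
      by (simp add: \<open>i = (h, x)\<close> tmul_assoc)
  qed
  then show ?thesis
    using assms by (simp add: bsum_eq bvalid_rmul_list hp_mul_rep)
qed

lemma bsum_rmul_list_cong:
  "bvalid sc D S l \<Longrightarrow> bvalid sc D S l' \<Longrightarrow> y \<in> Hp \<Longrightarrow> bsum sc D S l = bsum sc D S l' \<Longrightarrow>
   bsum sc D S (rmul_list sc D S l y) = bsum sc D S (rmul_list sc D S l' y)"
  by (simp add: fun_eq_iff bsum_rmul_list)

lemma ract_eq: "f \<in> Hb \<Longrightarrow> y \<in> Hp \<Longrightarrow> ract sc D S f y = (\<lambda>k. hp_mul sc D S (f k) y)"
proof -
  assume f: "f \<in> Hb" and y: "y \<in> Hp"
  let ?l = "SOME l. bvalid sc D S l \<and> bsum sc D S l = f"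
  have "\<exists>l. bvalid sc D S l \<and> bsum sc D S l = f" using f by (auto simp: Hbar_iff)
  then have "bvalid sc D S ?l \<and> bsum sc D S ?l = f" by (rule someI_ex)
  then show ?thesis unfolding ract_def using y by (auto simp: bsum_rmul_list)
qed

lemma ract_in_Hbar: "f \<in> Hb \<Longrightarrow> y \<in> Hp \<Longrightarrow> ract sc D S f y \<in> Hb"
proof -
  assume f: "f \<in> Hb" and y: "y \<in> Hp"
  then obtain l where "bvalid sc D S l" "f = bsum sc D S l" by (auto simp: Hbar_iff)
  with y have "ract sc D S f y = bsum sc D S (rmul_list sc D S l y)"
    by (simp add: ract_eq[OF f y] fun_eq_iff bsum_rmul_list)
  then show ?thesis using bvalid_rmul_list Hbar_iff by metis
qed

lemma Hbar_add: "f \<in> Hb \<Longrightarrow> f (a + b) = hp_add sc D S (f a) (f b)"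
proof -
  assume "f \<in> Hb"
  then obtain l where l: "bvalid sc D S l" "f = bsum sc D S l" by (auto simp: Hbar_iff)
  have "Q (bsum_rep l (a + b)) = Q (\<Sum>(h, x)\<leftarrow>l. tmul (gen (a * h)) (rep x) + tmul (gen (b * h)) (rep x))"
    unfolding bsum_rep_def
  proof (rule Q_cong_sum_list, clarify)
    fix h x
    show "Q (tmul (gen ((a + b) * h)) (rep x)) = Q (tmul (gen (a * h)) (rep x) + tmul (gen (b * h)) (rep x))"
      using Q_cong_mul[OF Q_gen_add refl, where q = "rep x"] by (simp add: distrib_right tmul_left.add)
  qed
  also have "\<dots> = Q (bsum_rep l a + bsum_rep l b)"
    by (simp add: bsum_rep_def split_def sum_list_addf)
  finally show ?thesis by (simp add: l bsum_eq hp_add_Q)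
qed

lemma Hbar_sc: "f \<in> Hb \<Longrightarrow> f (sc c a) = hp_sc sc D S c (f a)"
proof -
  assume "f \<in> Hb"
  then obtain l where l: "bvalid sc D S l" "f = bsum sc D S l" by (auto simp: Hbar_iff)
  have "Q (bsum_rep l (sc c a)) = Q (tsc c (bsum_rep l a))"
    unfolding bsum_rep_def fvs.module_hom_scale_self[THEN module_hom.sum_list_map]
  proof (rule Q_cong_sum_list, clarify)
    fix h x
    show "Q (tmul (gen (sc c a * h)) (rep x)) = Q (tsc c (tmul (gen (a * h)) (rep x)))"
      using Q_cong_mul[OF Q_gen_sc refl, where q = "rep x"]
      by (simp add: sc_mult_left[symmetric] tmul_left.scale)
  qed
  then show ?thesis by (simp add: l bsum_eq hp_sc_Q)
qed

lemma Hbar_cvs: "cvs Hb (fadd sc D S) (fzero sc D S) (fsc sc D S)"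
  unfolding cvs_def
proof (intro conjI ballI allI)
  show "fzero sc D S \<in> Hb" by (rule fzero_in_Hbar)
  show "fadd sc D S x y \<in> Hb" if "x \<in> Hb" "y \<in> Hb" for x y using that by (rule fadd_in_Hbar)
  show "fsc sc D S c x \<in> Hb" if "x \<in> Hb" for c x using that by (rule fsc_in_Hbar)
  fix x y w assume x: "x \<in> Hb" and y: "y \<in> Hb" and w: "w \<in> Hb"
  obtain F where F: "x = (\<lambda>k. Q (F k))" using x by (rule Hbar_Q_form)
  obtain G where G: "y = (\<lambda>k. Q (G k))" using y by (rule Hbar_Q_form)
  obtain H where H: "w = (\<lambda>k. Q (H k))" using w by (rule Hbar_Q_form)
  show "fadd sc D S (fadd sc D S x y) w = fadd sc D S x (fadd sc D S y w)"
    by (simp add: F G H fadd_Q add.assoc)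
  show "fadd sc D S x y = fadd sc D S y x"
    by (simp add: F G fadd_Q add.commute)
  fix c show "fsc sc D S c (fadd sc D S x y) = fadd sc D S (fsc sc D S c x) (fsc sc D S c y)"
    by (simp add: F G fsc_Q fadd_Q fvs.scale_right_distrib)
next
  fix x assume x: "x \<in> Hb"
  then obtain F where F: "x = (\<lambda>k. Q (F k))" by (rule Hbar_Q_form)
  show "fadd sc D S (fzero sc D S) x = x" by (simp add: F fzero_Q fadd_Q)
  show "fsc sc D S 1 x = x" by (simp add: F fsc_Q)
  show "\<exists>y\<in>Hb. fadd sc D S x y = fzero sc D S"
  proof
    show "fsc sc D S (-1) x \<in> Hb" by (rule fsc_in_Hbar[OF x])
    show "fadd sc D S x (fsc sc D S (-1) x) = fzero sc D S"
      by (simp add: F fsc_Q fadd_Q fzero_Q fvs.scale_minus_left)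
  qed
  fix c d
  show "fsc sc D S (c + d) x = fadd sc D S (fsc sc D S c x) (fsc sc D S d x)"
    by (simp add: F fsc_Q fadd_Q fvs.scale_left_distrib)
  show "fsc sc D S (c * d) x = fsc sc D S c (fsc sc D S d x)"
    by (simp add: F fsc_Q)
qed

lemma Hbar_hmod: "hmod sc Hb (fadd sc D S) (fzero sc D S) (fsc sc D S) hom_act"
  unfolding hmod_def
proof (intro conjI allI ballI)
  show "cvs Hb (fadd sc D S) (fzero sc D S) (fsc sc D S)" by (rule Hbar_cvs)
  show "clin Hb (fadd sc D S) (fsc sc D S) Hb (fadd sc D S) (fsc sc D S) (hom_act h)" for h
    unfolding clin_def by (auto simp: hom_act_in_Hbar) (auto simp: hom_act_def fadd_def fsc_def)
  fix h k v assume v: "v \<in> Hb"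
  show "hom_act (h + k) v = fadd sc D S (hom_act h v) (hom_act k v)"
    by (simp add: fun_eq_iff hom_act_def fadd_def distrib_left Hbar_add[OF v])
  show "hom_act (h * k) v = hom_act h (hom_act k v)"
    by (simp add: hom_act_def mult.assoc)
  show "hom_act 1 v = v" by (simp add: hom_act_def)
  fix c show "hom_act (sc c h) v = fsc sc D S c (hom_act h v)"
    by (simp add: fun_eq_iff hom_act_def fsc_def sc_mult_right[symmetric] Hbar_sc[OF v])
qed

lemma Hbar_bimodule:
  "bimodule sc Hb (fadd sc D S) (fzero sc D S) (fsc sc D S) hom_act
     Hp (hp_add sc D S) (hp_sc sc D S) (hp_mul sc D S) (hp_one sc D S) (ract sc D S)"
  unfolding bimodule_def
proof (intro conjI ballI allI)
  show "hmod sc Hb (fadd sc D S) (fzero sc D S) (fsc sc D S) hom_act" by (rule Hbar_hmod)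
  fix f assume f: "f \<in> Hb"
  then obtain F where F: "f = (\<lambda>k. Q (F k))" by (rule Hbar_Q_form)
  show "ract sc D S f (hp_one sc D S) = f"
    by (simp add: ract_eq[OF f] hp_one_eq) (simp add: F hp_mul_Q)
  fix y assume y: "y \<in> Hp"
  then obtain a where a: "y = Q a" by (rule Hp_Q_form)
  show "ract sc D S f y \<in> Hb" using f y by (rule ract_in_Hbar)
  show "hom_act h (ract sc D S f y) = ract sc D S (hom_act h f) y" for h
    by (simp add: ract_eq[OF f y] ract_eq[OF hom_act_in_Hbar[OF f] y]) (simp add: hom_act_def)
  fix c
  show "ract sc D S f (hp_sc sc D S c y) = fsc sc D S c (ract sc D S f y)"
    using y by (simp add: a hp_sc_Q ract_eq[OF f]) (simp add: F hp_mul_Q fsc_Q tmul_right.scale)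
  show "ract sc D S (fsc sc D S c f) y = fsc sc D S c (ract sc D S f y)"
    using fsc_in_Hbar[OF f, of c] y
    by (simp add: ract_eq f) (simp add: F a hp_sc_Q hp_mul_Q fsc_Q tmul_left.scale)
  fix y' assume y': "y' \<in> Hp"
  then obtain b where b: "y' = Q b" by (rule Hp_Q_form)
  show "ract sc D S (ract sc D S f y) y' = ract sc D S f (hp_mul sc D S y y')"
    using ract_in_Hbar[OF f y] y y' hp_mul_Q[of a b]
    by (simp add: ract_eq f a b) (simp add: F hp_mul_Q tmul_assoc)
  show "ract sc D S f (hp_add sc D S y y') = fadd sc D S (ract sc D S f y) (ract sc D S f y')"
    using y y' by (simp add: a b hp_add_Q ract_eq[OF f]) (simp add: F hp_mul_Q fadd_Q tmul_right.add)
next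
  fix f g y assume f: "f \<in> Hb" and g: "g \<in> Hb" and y: "y \<in> Hp"
  obtain F where F: "f = (\<lambda>k. Q (F k))" using f by (rule Hbar_Q_form)
  obtain G where G: "g = (\<lambda>k. Q (G k))" using g by (rule Hbar_Q_form)
  obtain a where a: "y = Q a" using y by (rule Hp_Q_form)
  show "ract sc D S (fadd sc D S f g) y = fadd sc D S (ract sc D S f y) (ract sc D S g y)"
    using fadd_in_Hbar[OF f g] y f g by (simp add: ract_eq) (simp add: F G a hp_mul_Q fadd_Q tmul_left.add)
qed

end

section \<open>\<open>H\<^sub>p\<^sub>a\<^sub>r\<close> acting on a partial module\<close>

locale partial_hmodule = hpar sc D S
  for sc :: "'k::field \<Rightarrow> 'h::ring_1 \<Rightarrow> 'h" and D S +
  fixes scM :: "'k \<Rightarrow> 'm::ab_group_add \<Rightarrow> 'm" and \<pi> :: "'h \<Rightarrow> 'm \<Rightarrow> 'm"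
  assumes pmod: "pmod sc D S UNIV (+) 0 scM \<pi>"
begin

lemma M_module: "module scM"
  using pmod unfolding pmod_def cvs_def by unfold_locales auto

sublocale M: module scM by (rule M_module)

lemma pi_module_hom: "module_hom scM scM (\<pi> h)"
  using pmod by (simp add: pmod_def clin_def module_hom_iff M_module)

sublocale pi: module_hom scM scM "\<pi> h" for h
  by (rule pi_module_hom)

lemma pi_add_left: "\<pi> (h + k) m = \<pi> h m + \<pi> k m"
  using pmod by (simp add: pmod_def)

lemma pi_sc_left: "\<pi> (sc c h) m = scM c (\<pi> h m)"
  using pmod by (simp add: pmod_def)

lemma pi_one: "\<pi> 1 m = m"
  using pmod by (simp add: pmod_def)

lemma pi_absorb_left:
  "(\<Sum>i\<leftarrow>D k. \<pi> h (\<pi> (fst i) (\<pi> (S (snd i)) v))) = (\<Sum>i\<leftarrow>D k. \<pi> (h * fst i) (\<pi> (S (snd i)) v))"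
  and pi_absorb_right:
  "(\<Sum>i\<leftarrow>D h. \<pi> (fst i) (\<pi> (S (snd i)) (\<pi> k v))) = (\<Sum>i\<leftarrow>D h. \<pi> (fst i) (\<pi> (S (snd i) * k) v))"
  and pi_absorb_antipode_left:
  "(\<Sum>i\<leftarrow>D k. \<pi> h (\<pi> (S (fst i)) (\<pi> (snd i) v))) = (\<Sum>i\<leftarrow>D k. \<pi> (h * S (fst i)) (\<pi> (snd i) v))"
  and pi_absorb_antipode_right:
  "(\<Sum>i\<leftarrow>D h. \<pi> (S (fst i)) (\<pi> (snd i) (\<pi> k v))) = (\<Sum>i\<leftarrow>D h. \<pi> (S (fst i)) (\<pi> (snd i * k) v))"
  using pmod unfolding pmod_def csum_def sum_list.eq_foldr split_def by simp_all

lemma word_act_append: "word_act \<pi> (u @ v) m = word_act \<pi> u (word_act \<pi> v m)"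
  by (induction u) (simp_all add: word_act_def)

lemma word_act_module_hom: "module_hom scM scM (word_act \<pi> w)"
proof (induction w)
  case Nil
  then show ?case by (simp add: word_act_def M.module_hom_ident)
next
  case (Cons h w)
  then show ?case
    using module_hom_compose[OF Cons pi_module_hom[of h]] by (simp add: word_act_def comp_def)
qed

sublocale word_act: module_hom scM scM "word_act \<pi> w" for w
  by (rule word_act_module_hom)

abbreviation "tev \<equiv> teval scM \<pi>"

lemma teval_lin_ext: "tev p m = lin_ext scM (\<lambda>w. word_act \<pi> w m) p"
  by (simp add: teval_def lin_ext_def)

sublocale tev: module_hom tsc scM "\<lambda>p. tev p m" for m
  unfolding teval_lin_ext by (rule module_hom_lin_ext[OF M_module])

lemma teval_module_hom_right: "module_hom scM scM (tev p)"
  by (simp add: module_hom_iff M_module teval_def word_act.add word_act.scale sum.distrib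
      M.scale_right_distrib M.scale_left_commute M.scale_sum_right mult.commute)

sublocale tev_right: module_hom scM scM "tev p" for p
  by (rule teval_module_hom_right)

lemma teval_single: "tev (Poly_Mapping.single w c) m = scM c (word_act \<pi> w m)"
  by (simp add: teval_lin_ext lin_ext_single[OF M_module])

lemma teval_gen [simp]: "tev (gen h) m = \<pi> h m"
  by (simp add: gen_def teval_single word_act_def)

lemma teval_tone [simp]: "tev tone m = m"
  by (simp add: tone_def teval_single word_act_def)

lemma teval_tmul: "tev (tmul p q) m = tev p (tev q m)"
proof (rule module_hom_eqI[where s = scM and L = "\<lambda>p. tev (tmul p q) m"])
  show "module_hom tsc scM (\<lambda>p. tev (tmul p q) m)"
    using module_hom_compose[OF module_hom_tmul_left tev.module_hom_axioms] by (simp add: comp_def)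
  show "module_hom tsc scM (\<lambda>p. tev p (tev q m))" by (rule tev.module_hom_axioms)
  fix u
  show "tev (tmul (Poly_Mapping.single u 1) q) m = tev (Poly_Mapping.single u 1) (tev q m)"
  proof (rule module_hom_eqI[where s = scM and L = "\<lambda>q. tev (tmul (Poly_Mapping.single u 1) q) m"])
    show "module_hom tsc scM (\<lambda>q. tev (tmul (Poly_Mapping.single u 1) q) m)"
      using module_hom_compose[OF module_hom_tmul_right tev.module_hom_axioms] by (simp add: comp_def)
    show "module_hom tsc scM (\<lambda>q. tev (Poly_Mapping.single u 1) (tev q m))"
      using module_hom_compose[OF tev.module_hom_axioms tev_right.module_hom_axioms] by (simp add: comp_def)
  qed (simp add: tmul_single teval_single word_act_append)
qed

lemma teval_par_rels: "r \<in> par_rels sc D S \<Longrightarrow> tev r m = 0"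
  unfolding par_rels_def
  by (auto simp: tev.diff tev.add tev.scale tev.sum_list_map split_def teval_tmul pi_add_left pi_sc_left
      pi_one pi_absorb_left pi_absorb_right pi_absorb_antipode_left pi_absorb_antipode_right)

lemma teval_ideal: "p \<in> I \<Longrightarrow> tev p m = 0"
proof (rule tev.eq_0_on_span)
  fix r assume "r \<in> par_ideal_gens sc D S"
  then obtain u r0 v where "r = tmul (tmul u r0) v" "r0 \<in> par_rels sc D S"
    by (auto simp: par_ideal_gens_def)
  then show "tev r m = 0" by (simp add: teval_tmul teval_par_rels)
qed

lemma hp_act_Q: "hp_act scM \<pi> (Q p) m = tev p m"
proof -
  have "tev (rep (Q p) - p) m = 0" by (rule teval_ideal[OF rep_qcl])
  then show ?thesis by (simp add: hp_act_def tev.diff)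
qed

abbreviation "hpa \<equiv> hp_act scM \<pi>"

lemma hpa_add: "x \<in> Hp \<Longrightarrow> y \<in> Hp \<Longrightarrow> hpa (hp_add sc D S x y) m = hpa x m + hpa y m"
  by (auto simp: hp_carrier_eq hp_add_Q hp_act_Q tev.add)

lemma hpa_sc: "x \<in> Hp \<Longrightarrow> hpa (hp_sc sc D S c x) m = scM c (hpa x m)"
  by (auto simp: hp_carrier_eq hp_sc_Q hp_act_Q tev.scale)

lemma hpa_mul: "x \<in> Hp \<Longrightarrow> y \<in> Hp \<Longrightarrow> hpa (hp_mul sc D S x y) m = hpa x (hpa y m)"
  by (auto simp: hp_carrier_eq hp_mul_Q hp_act_Q teval_tmul)

lemma hpa_add_right: "hpa y (m + m') = hpa y m + hpa y m'"
  by (simp add: hp_act_def tev_right.add)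

lemma hpa_sc_right: "hpa y (scM c m) = scM c (hpa y m)"
  by (simp add: hp_act_def tev_right.scale)

section \<open>The secondary dilation \<open>Hbar \<otimes>\<^bsub>H\<^sub>p\<^sub>a\<^sub>r\<^esub> M\<close>\<close>

abbreviation "phi1 \<equiv> phi sc D S (hp_one sc D S)"

lemma phi1_apply: "phi1 k = Q (gen k)"
  by (simp add: hp_one_eq phi_Q)

lemma phi1_in_Hbar: "phi1 \<in> Hb"
  by (rule phi_in_Hbar) (simp add: hp_one_eq)

lemma hpa_phi1: "hpa (phi1 k) m = \<pi> k m"
  by (simp add: phi1_apply hp_act_Q)

abbreviation "W \<equiv> fvs.span (ten_rels sc D S scM \<pi>)"
abbreviation "Qt \<equiv> qcl W"
abbreviation "N \<equiv> Nsec sc D S scM \<pi>"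
abbreviation "N_add \<equiv> nadd sc D S scM \<pi>"
abbreviation "N_zero \<equiv> nzero sc D S scM \<pi>"
abbreviation "N_sc \<equiv> nsc sc D S scM \<pi>"
abbreviation "N_act \<equiv> nact sc D S scM \<pi>"
abbreviation "T \<equiv> Tsec sc D S scM \<pi>"
abbreviation "\<theta> \<equiv> phisec sc D S scM \<pi>"

lemma ten_W_eq: "ten_W sc D S scM \<pi> = W"
  by (simp add: ten_W_def fspan_eq_span)

lemma ten_rels_memI:
  "f \<in> Hb \<Longrightarrow> g \<in> Hb \<Longrightarrow> etn (fadd sc D S f g) m - etn f m - etn g m \<in> ten_rels sc D S scM \<pi>"
  "f \<in> Hb \<Longrightarrow> etn f (m + m') - etn f m - etn f m' \<in> ten_rels sc D S scM \<pi>"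
  "f \<in> Hb \<Longrightarrow> etn (fsc sc D S c f) m - tsc c (etn f m) \<in> ten_rels sc D S scM \<pi>"
  "f \<in> Hb \<Longrightarrow> etn f (scM c m) - tsc c (etn f m) \<in> ten_rels sc D S scM \<pi>"
  "f \<in> Hb \<Longrightarrow> y \<in> Hp \<Longrightarrow> etn (ract sc D S f y) m - etn f (hpa y m) \<in> ten_rels sc D S scM \<pi>"
  unfolding ten_rels_def by blast+

lemma ten_rels_cases:
  assumes "r \<in> ten_rels sc D S scM \<pi>"
    and "\<And>f g m. f \<in> Hb \<Longrightarrow> g \<in> Hb \<Longrightarrow> P (etn (fadd sc D S f g) m - etn f m - etn g m)"
    and "\<And>f m m'. f \<in> Hb \<Longrightarrow> P (etn f (m + m') - etn f m - etn f m')"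
    and "\<And>c f m. f \<in> Hb \<Longrightarrow> P (etn (fsc sc D S c f) m - tsc c (etn f m))"
    and "\<And>c f m. f \<in> Hb \<Longrightarrow> P (etn f (scM c m) - tsc c (etn f m))"
    and "\<And>f y m. f \<in> Hb \<Longrightarrow> y \<in> Hp \<Longrightarrow> P (etn (ract sc D S f y) m - etn f (hpa y m))"
  shows "P r"
  using assms unfolding ten_rels_def by blast

lemma Qt_etn_add_left: "f \<in> Hb \<Longrightarrow> g \<in> Hb \<Longrightarrow> Qt (etn (fadd sc D S f g) m) = Qt (etn f m + etn g m)"
  using fvs.span_base[OF ten_rels_memI(1)] by (simp add: qcl_eq_iff diff_diff_eq)

lemma Qt_etn_add_right: "f \<in> Hb \<Longrightarrow> Qt (etn f (m + m')) = Qt (etn f m + etn f m')"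
  using fvs.span_base[OF ten_rels_memI(2)] by (simp add: qcl_eq_iff diff_diff_eq)

lemma Qt_etn_sc_right: "f \<in> Hb \<Longrightarrow> Qt (etn f (scM c m)) = Qt (tsc c (etn f m))"
  using fvs.span_base[OF ten_rels_memI(4)] by (simp add: qcl_eq_iff)

lemma Qt_etn_balanced: "f \<in> Hb \<Longrightarrow> y \<in> Hp \<Longrightarrow> Qt (etn (ract sc D S f y) m) = Qt (etn f (hpa y m))"
  using fvs.span_base[OF ten_rels_memI(5)] by (simp add: qcl_eq_iff)

lemma N_add_Qt: "N_add (Qt p) (Qt q) = Qt (p + q)"
  by (simp add: nadd_def ten_W_eq qcl_add_rep)

lemma N_sc_Qt: "N_sc c (Qt p) = Qt (tsc c p)"
  by (simp add: nsc_def ten_W_eq qcl_tsc_rep)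

lemma N_zero_eq: "N_zero = Qt 0"
  by (simp add: nzero_def ten_W_eq)

lemma Qt_cong_add: "Qt p = Qt p' \<Longrightarrow> Qt q = Qt q' \<Longrightarrow> Qt (p + q) = Qt (p' + q')"
  using N_add_Qt[of p q] N_add_Qt[of p' q'] by simp

lemma Qt_cong_tsc: "Qt p = Qt p' \<Longrightarrow> Qt (tsc c p) = Qt (tsc c p')"
  using N_sc_Qt[of c p] N_sc_Qt[of c p'] by simp

lemma Qt_cong_sum_list:
  "(\<And>i. i \<in> set l \<Longrightarrow> Qt (f i) = Qt (g i)) \<Longrightarrow> Qt (\<Sum>i\<leftarrow>l. f i) = Qt (\<Sum>i\<leftarrow>l. g i)"
proof (induction l)
  case (Cons a l)
  then show ?case using Qt_cong_add[of "f a" "g a"] by simp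
qed simp

lemma Qt_etn_zero: "f \<in> Hb \<Longrightarrow> Qt (etn f 0) = Qt 0"
  using Qt_etn_sc_right[of f 0 0] by (simp add: fvs.scale_zero_left)

lemma Qt_etn_fzero: "Qt (etn (fzero sc D S) m) = Qt 0"
proof -
  have "fsc sc D S 0 (fzero sc D S) = fzero sc D S" by (simp add: fzero_Q fsc_Q)
  moreover have "etn (fsc sc D S 0 (fzero sc D S)) m \<in> W"
    using fvs.span_base[OF ten_rels_memI(3)[OF fzero_in_Hbar, of 0 m]] by (simp add: fvs.scale_zero_left)
  ultimately have "etn (fzero sc D S) m \<in> W" by metis
  then show ?thesis by (simp add: qcl_eq_iff)
qed

lemma Qt_etn_sum:
  assumes "f \<in> Hb"
  shows "Qt (etn f (\<Sum>k\<in>A. scM (c k) (e k))) = Qt (\<Sum>k\<in>A. tsc (c k) (etn f (e k)))"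
proof (induction A rule: infinite_finite_induct)
  case (insert x F)
  have "Qt (etn f (scM (c x) (e x) + (\<Sum>k\<in>F. scM (c k) (e k))))
      = Qt (etn f (scM (c x) (e x)) + etn f (\<Sum>k\<in>F. scM (c k) (e k)))"
    by (rule Qt_etn_add_right[OF assms])
  also have "\<dots> = Qt (tsc (c x) (etn f (e x)) + (\<Sum>k\<in>F. tsc (c k) (etn f (e k))))"
    by (rule Qt_cong_add[OF Qt_etn_sc_right[OF assms] insert.IH])
  finally show ?case using insert by simp
qed (simp_all add: Qt_etn_zero[OF assms])

definition shift_key :: "'h \<Rightarrow> ('h \<Rightarrow> ('h, 'k) hpar) \<times> 'm \<Rightarrow> ('h \<Rightarrow> ('h, 'k) hpar) \<times> 'm" where
  "shift_key h = (\<lambda>(f, m). (hom_act h f, m))"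

definition T_key :: "('h \<Rightarrow> ('h, 'k) hpar) \<times> 'm \<Rightarrow> ('h \<Rightarrow> ('h, 'k) hpar) \<times> 'm" where
  "T_key = (\<lambda>(f, m). (phi1, hpa (f 1) m))"

definition contract :: "(('h \<Rightarrow> ('h, 'k) hpar) \<times> 'm \<Rightarrow>\<^sub>0 'k) \<Rightarrow> 'm" where
  "contract = lin_ext scM (\<lambda>(f, m). hpa (f 1) m)"

sublocale contract: module_hom tsc scM contract
  unfolding contract_def by (rule module_hom_lin_ext[OF M_module])

lemma etn_single: "Poly_Mapping.single (f, m) 1 = etn f m"
  by (simp add: etn_def)

lemma shift_key_etn: "pmmap (shift_key h) (etn f m) = etn (hom_act h f) m"
  by (simp add: etn_def shift_key_def)

lemma T_key_etn: "pmmap T_key (etn f m) = etn phi1 (hpa (f 1) m)"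
  by (simp add: etn_def T_key_def)

lemma contract_etn: "contract (etn f m) = hpa (f 1) m"
  by (simp add: contract_def etn_def lin_ext_single[OF M_module])

lemma N_act_eq: "N_act h A = Qt (pmmap (shift_key h) (rep A))"
  by (simp add: nact_def ten_W_eq shift_key_def)

lemma T_eq: "T A = Qt (pmmap T_key (rep A))"
  by (simp add: Tsec_def ten_W_eq T_key_def)

lemma theta_eq: "\<theta> m = Qt (etn phi1 m)"
  by (simp add: phisec_def ten_W_eq)

lemma hom_act_ract: "f \<in> Hb \<Longrightarrow> y \<in> Hp \<Longrightarrow> hom_act h (ract sc D S f y) = ract sc D S (hom_act h f) y"
  by (simp add: ract_eq hom_act_in_Hbar) (simp add: hom_act_def)

lemma shift_key_ten_rels: "r \<in> ten_rels sc D S scM \<pi> \<Longrightarrow> pmmap (shift_key h) r \<in> W"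
proof (erule ten_rels_cases)
  fix f g m assume "f \<in> Hb" "g \<in> Hb"
  moreover have "hom_act h (fadd sc D S f g) = fadd sc D S (hom_act h f) (hom_act h g)"
    by (simp add: hom_act_def fadd_def)
  ultimately show "pmmap (shift_key h) (etn (fadd sc D S f g) m - etn f m - etn g m) \<in> W"
    by (simp add: pmmap.diff shift_key_etn)
      (intro fvs.span_base ten_rels_memI hom_act_in_Hbar)
next
  fix f m m' assume "f \<in> Hb"
  then show "pmmap (shift_key h) (etn f (m + m') - etn f m - etn f m') \<in> W"
    by (simp add: pmmap.diff shift_key_etn)
      (intro fvs.span_base ten_rels_memI hom_act_in_Hbar)
next
  fix c f m assume "f \<in> Hb"
  moreover have "hom_act h (fsc sc D S c f) = fsc sc D S c (hom_act h f)"
    by (simp add: hom_act_def fsc_def)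
  ultimately show "pmmap (shift_key h) (etn (fsc sc D S c f) m - tsc c (etn f m)) \<in> W"
    by (simp add: pmmap.diff pmmap.scale shift_key_etn)
      (intro fvs.span_base ten_rels_memI hom_act_in_Hbar)
next
  fix c f m assume "f \<in> Hb"
  then show "pmmap (shift_key h) (etn f (scM c m) - tsc c (etn f m)) \<in> W"
    by (simp add: pmmap.diff pmmap.scale shift_key_etn)
      (intro fvs.span_base ten_rels_memI hom_act_in_Hbar)
next
  fix f y m assume "f \<in> Hb" "y \<in> Hp"
  then show "pmmap (shift_key h) (etn (ract sc D S f y) m - etn f (hpa y m)) \<in> W"
    by (simp add: pmmap.diff shift_key_etn hom_act_ract)
      (intro fvs.span_base ten_rels_memI hom_act_in_Hbar)
qed

lemma T_key_ten_rels: "r \<in> ten_rels sc D S scM \<pi> \<Longrightarrow> pmmap T_key r \<in> W"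
proof (erule ten_rels_cases)
  fix f g m assume "f \<in> Hb" "g \<in> Hb"
  then show "pmmap T_key (etn (fadd sc D S f g) m - etn f m - etn g m) \<in> W"
    by (simp add: pmmap.diff T_key_etn fadd_def hpa_add Hbar_apply_in)
      (intro fvs.span_base ten_rels_memI phi1_in_Hbar)
next
  fix f m m' assume "f \<in> Hb"
  then show "pmmap T_key (etn f (m + m') - etn f m - etn f m') \<in> W"
    by (simp add: pmmap.diff T_key_etn hpa_add_right)
      (intro fvs.span_base ten_rels_memI phi1_in_Hbar)
next
  fix c f m assume "f \<in> Hb"
  then show "pmmap T_key (etn (fsc sc D S c f) m - tsc c (etn f m)) \<in> W"
    by (simp add: pmmap.diff pmmap.scale T_key_etn
        fsc_def hpa_sc Hbar_apply_in)
      (intro fvs.span_base ten_rels_memI phi1_in_Hbar)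
next
  fix c f m assume "f \<in> Hb"
  then show "pmmap T_key (etn f (scM c m) - tsc c (etn f m)) \<in> W"
    by (simp add: pmmap.diff pmmap.scale T_key_etn
        hpa_sc_right)
      (intro fvs.span_base ten_rels_memI phi1_in_Hbar)
next
  fix f y m assume "f \<in> Hb" "y \<in> Hp"
  then show "pmmap T_key (etn (ract sc D S f y) m - etn f (hpa y m)) \<in> W"
    by (simp add: pmmap.diff T_key_etn ract_eq hpa_mul Hbar_apply_in fvs.span_zero)
qed

lemma contract_ten_rels: "r \<in> ten_rels sc D S scM \<pi> \<Longrightarrow> contract r = 0"
  by (erule ten_rels_cases)
    (simp_all add: contract.diff contract.scale contract_etn fadd_def fsc_def hpa_add hpa_sc
      hpa_add_right hpa_sc_right ract_eq hpa_mul Hbar_apply_in)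

lemma contract_Qt_eq: "Qt p = Qt q \<Longrightarrow> contract p = contract q"
  using contract.eq_0_on_span[OF contract_ten_rels, where x = "p - q"] by (simp add: qcl_eq_iff contract.diff)

lemma N_act_Qt: "N_act h (Qt p) = Qt (pmmap (shift_key h) p)"
  unfolding N_act_eq by (rule qcl_hom_rep[OF module_hom_pmmap shift_key_ten_rels])

lemma T_Qt: "T (Qt p) = \<theta> (contract p)"
proof -
  have "pmmap T_key p = (\<Sum>k\<in>Poly_Mapping.keys p. tsc (Poly_Mapping.lookup p k) (etn phi1 (hpa (fst k 1) (snd k))))"
    by (subst module_hom_expand[OF module_hom_pmmap]) (simp add: T_key_def etn_def case_prod_beta)
  moreover have "contract p = (\<Sum>k\<in>Poly_Mapping.keys p. scM (Poly_Mapping.lookup p k) (hpa (fst k 1) (snd k)))"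
    by (simp add: contract_def lin_ext_def case_prod_beta)
  ultimately show ?thesis
    by (simp add: T_eq theta_eq qcl_hom_rep[OF module_hom_pmmap T_key_ten_rels] Qt_etn_sum[OF phi1_in_Hbar])
qed

lemma theta_add: "\<theta> (m + m') = N_add (\<theta> m) (\<theta> m')"
  by (simp add: theta_eq N_add_Qt Qt_etn_add_right[OF phi1_in_Hbar])

lemma theta_sc: "\<theta> (scM c m) = N_sc c (\<theta> m)"
  by (simp add: theta_eq N_sc_Qt Qt_etn_sc_right[OF phi1_in_Hbar])

lemma theta_zero: "\<theta> 0 = N_zero"
  by (simp add: theta_eq N_zero_eq Qt_etn_zero[OF phi1_in_Hbar])

lemma N_act_theta: "N_act h (\<theta> m) = Qt (etn (hom_act h phi1) m)"
  by (simp add: theta_eq N_act_Qt shift_key_etn)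

lemma T_N_act_theta: "T (N_act h (\<theta> m)) = \<theta> (\<pi> h m)"
  by (simp add: N_act_theta T_Qt contract_etn hom_act_def hpa_phi1)

lemma inj_theta: "inj \<theta>"
proof (rule injI)
  fix m m' assume "\<theta> m = \<theta> m'"
  then have "contract (etn phi1 m) = contract (etn phi1 m')"
    by (intro contract_Qt_eq) (simp add: theta_eq)
  then show "m = m'" by (simp add: contract_etn hpa_phi1 pi_one)
qed

abbreviation "Hb_supp \<equiv> {p. Poly_Mapping.keys p \<subseteq> Hb \<times> UNIV}"

lemma N_iff: "x \<in> N \<longleftrightarrow> (\<exists>p \<in> Hb_supp. x = Qt p)"
  by (auto simp: Nsec_def ten_W_eq)

lemma Qt_in_N: "p \<in> Hb_supp \<Longrightarrow> Qt p \<in> N"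
  by (auto simp: N_iff)

lemma N_Qt_form:
  assumes "x \<in> N"
  obtains p where "p \<in> Hb_supp" "x = Qt p"
  using assms by (auto simp: N_iff)

lemma Hb_supp_pmmap_shift_key: "p \<in> Hb_supp \<Longrightarrow> pmmap (shift_key h) p \<in> Hb_supp"
  using keys_pmmap[of "shift_key h" p] by (fastforce simp: shift_key_def hom_act_in_Hbar)

lemma theta_in_N: "\<theta> m \<in> N"
  unfolding theta_eq by (rule Qt_in_N) (simp add: etn_def phi1_in_Hbar)

lemma N_cvs: "cvs N N_add N_zero N_sc"
  unfolding cvs_def
proof (intro conjI ballI allI)
  show "N_zero \<in> N" unfolding N_zero_eq by (rule Qt_in_N) simp
  fix x y w assume x: "x \<in> N" and y: "y \<in> N" and w: "w \<in> N"
  obtain p where p: "p \<in> Hb_supp" "x = Qt p" using x by (rule N_Qt_form)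
  obtain q where q: "q \<in> Hb_supp" "y = Qt q" using y by (rule N_Qt_form)
  obtain r where r: "w = Qt r" using w by (rule N_Qt_form)
  show "N_add x y \<in> N"
    unfolding p q N_add_Qt using p q keys_add[of p q] by (intro Qt_in_N) auto
  show "N_add (N_add x y) w = N_add x (N_add y w)" by (simp add: p q r N_add_Qt add.assoc)
  show "N_add x y = N_add y x" by (simp add: p q N_add_Qt add.commute)
  fix c show "N_sc c (N_add x y) = N_add (N_sc c x) (N_sc c y)"
    by (simp add: p q N_add_Qt N_sc_Qt fvs.scale_right_distrib)
next
  fix c x assume x: "x \<in> N"
  obtain p where p: "p \<in> Hb_supp" "x = Qt p" using x by (rule N_Qt_form)
  show "N_sc c x \<in> N" unfolding p N_sc_Qt using p keys_tsc[of c p] by (intro Qt_in_N) auto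
next
  fix x assume x: "x \<in> N"
  obtain p where p: "p \<in> Hb_supp" "x = Qt p" using x by (rule N_Qt_form)
  show "N_add N_zero x = x" by (simp add: p N_zero_eq N_add_Qt)
  show "N_sc 1 x = x" by (simp add: p N_sc_Qt)
  show "\<exists>y\<in>N. N_add x y = N_zero"
  proof
    show "Qt (- p) \<in> N" using p(1) keys_minus[of p] by (intro Qt_in_N) simp
  qed (simp add: p N_add_Qt N_zero_eq)
next
  fix c d x assume x: "x \<in> N"
  obtain p where p: "x = Qt p" using x by (rule N_Qt_form)
  show "N_sc (c + d) x = N_add (N_sc c x) (N_sc d x)" by (simp add: p N_sc_Qt N_add_Qt fvs.scale_left_distrib)
  show "N_sc (c * d) x = N_sc c (N_sc d x)" by (simp add: p N_sc_Qt)
qed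

lemma shift_key_mult: "shift_key h \<circ> shift_key k = shift_key (h * k)"
  by (auto simp: shift_key_def hom_act_def mult.assoc fun_eq_iff)

lemma shift_key_one: "shift_key 1 = (\<lambda>x. x)"
  by (auto simp: shift_key_def hom_act_def fun_eq_iff)

lemma N_hmod: "hmod sc N N_add N_zero N_sc N_act"
  unfolding hmod_def
proof (intro conjI allI ballI)
  show "cvs N N_add N_zero N_sc" by (rule N_cvs)
  show "clin N N_add N_sc N N_add N_sc (N_act h)" for h
    unfolding clin_def
  proof (intro conjI ballI allI)
    fix x assume x: "x \<in> N"
    obtain p where p: "p \<in> Hb_supp" "x = Qt p" using x by (rule N_Qt_form)
    show "N_act h x \<in> N" unfolding p N_act_Qt by (intro Qt_in_N Hb_supp_pmmap_shift_key p)
    fix c show "N_act h (N_sc c x) = N_sc c (N_act h x)"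
      by (simp add: p N_act_Qt N_sc_Qt pmmap.scale)
    fix y assume y: "y \<in> N"
    obtain q where q: "y = Qt q" using y by (rule N_Qt_form)
    show "N_act h (N_add x y) = N_add (N_act h x) (N_act h y)"
      by (simp add: p q N_act_Qt N_add_Qt pmmap.add)
  qed
next
  fix h k v assume v: "v \<in> N"
  obtain p where p: "p \<in> Hb_supp" "v = Qt p" using v by (rule N_Qt_form)
  have "pmmap (shift_key (h + k)) p - (pmmap (shift_key h) p + pmmap (shift_key k) p) \<in> W"
  proof (rule module_hom_diff_in_span[OF module_hom_pmmap fvs_pair.module_hom_add[OF module_hom_pmmap module_hom_pmmap]])
    fix kk assume "kk \<in> Poly_Mapping.keys p"
    then obtain f m where kk: "kk = (f, m)" and f: "f \<in> Hb" using p by force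
    have "hom_act (h + k) f = fadd sc D S (hom_act h f) (hom_act k f)"
      by (simp add: fun_eq_iff hom_act_def fadd_def distrib_left Hbar_add[OF f])
    then show "pmmap (shift_key (h + k)) (Poly_Mapping.single kk 1) -
       (pmmap (shift_key h) (Poly_Mapping.single kk 1) + pmmap (shift_key k) (Poly_Mapping.single kk 1)) \<in> W"
      using ten_rels_memI(1)[OF hom_act_in_Hbar[OF f] hom_act_in_Hbar[OF f], of h k m]
      by (simp add: kk etn_single shift_key_etn diff_diff_eq fvs.span_base)
  qed
  then show "N_act (h + k) v = N_add (N_act h v) (N_act k v)"
    by (simp add: p N_act_Qt N_add_Qt qcl_eq_iff)
  show "N_act (h * k) v = N_act h (N_act k v)"
    by (simp add: p N_act_Qt pmmap_comp shift_key_mult)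
  show "N_act 1 v = v" by (simp add: p N_act_Qt shift_key_one pmmap_id)
next
  fix c h v assume v: "v \<in> N"
  obtain p where p: "p \<in> Hb_supp" "v = Qt p" using v by (rule N_Qt_form)
  have "pmmap (shift_key (sc c h)) p - tsc c (pmmap (shift_key h) p) \<in> W"
  proof (rule module_hom_diff_in_span[OF module_hom_pmmap fvs_pair.module_hom_scale[OF module_hom_pmmap]])
    fix kk assume "kk \<in> Poly_Mapping.keys p"
    then obtain f m where kk: "kk = (f, m)" and f: "f \<in> Hb" using p by force
    have "hom_act (sc c h) f = fsc sc D S c (hom_act h f)"
      by (simp add: fun_eq_iff hom_act_def fsc_def sc_mult_right[symmetric] Hbar_sc[OF f])
    then show "pmmap (shift_key (sc c h)) (Poly_Mapping.single kk 1) - tsc c (pmmap (shift_key h) (Poly_Mapping.single kk 1)) \<in> W"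
      using ten_rels_memI(3)[OF hom_act_in_Hbar[OF f], of c h m]
      by (simp add: kk etn_single shift_key_etn fvs.span_base)
  qed
  then show "N_act (sc c h) v = N_sc c (N_act h v)"
    by (simp add: p N_act_Qt N_sc_Qt qcl_eq_iff)
qed

lemma T_theta: "T (\<theta> m) = \<theta> m"
  by (simp add: theta_eq T_Qt contract_etn hpa_phi1 pi_one)

lemma T_in_range_theta: "x \<in> N \<Longrightarrow> T x \<in> range \<theta>"
  by (auto simp: N_iff T_Qt)

lemma T_image: "T ` N = range \<theta>"
proof
  show "T ` N \<subseteq> range \<theta>" using T_in_range_theta by blast
  show "range \<theta> \<subseteq> T ` N" using T_theta theta_in_N by (metis image_eqI image_subsetI)
qed

lemma T_idem: "x \<in> N \<Longrightarrow> T (T x) = T x"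
  using T_in_range_theta T_theta by fastforce

lemma T_clin: "clin N N_add N_sc N N_add N_sc T"
  unfolding clin_def
proof (intro conjI ballI allI)
  fix x assume x: "x \<in> N"
  show "T x \<in> N" using T_in_range_theta[OF x] theta_in_N by auto
  obtain p where p: "x = Qt p" using x by (rule N_Qt_form)
  fix c show "T (N_sc c x) = N_sc c (T x)"
    by (simp add: p N_sc_Qt T_Qt contract.scale theta_sc)
  fix y assume y: "y \<in> N"
  obtain q where q: "y = Qt q" using y by (rule N_Qt_form)
  show "T (N_add x y) = N_add (T x) (T y)"
    by (simp add: p q N_add_Qt T_Qt contract.add theta_add)
qed

lemma bij_theta: "bij_betw \<theta> UNIV (T ` N)"
  unfolding T_image using inj_theta by (simp add: bij_betw_def)

lemma csum_theta: "csum N_add N_zero (map (\<lambda>i. \<theta> (F i)) l) = \<theta> (\<Sum>i\<leftarrow>l. F i)"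
  by (induction l) (simp_all add: csum_def theta_zero theta_add)

lemma pmod_T_image: "pmod sc D S (T ` N) N_add N_zero N_sc (\<lambda>h x. T (N_act h x))"
  unfolding T_image pmod_def
proof (intro conjI allI ballI)
  show "cvs (range \<theta>) N_add N_zero N_sc"
    unfolding cvs_def
  proof (intro conjI ballI allI)
    show "N_zero \<in> range \<theta>" by (metis theta_zero rangeI)
    fix x y w assume "x \<in> range \<theta>" "y \<in> range \<theta>" "w \<in> range \<theta>"
    then obtain a b d where x: "x = \<theta> a" and y: "y = \<theta> b" and w: "w = \<theta> d" by blast
    show "N_add x y \<in> range \<theta>" by (simp add: x y theta_add[symmetric])
    show "N_add (N_add x y) w = N_add x (N_add y w)" by (simp add: x y w theta_add[symmetric] add.assoc)
    show "N_add x y = N_add y x" by (simp add: x y theta_add[symmetric] add.commute)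
    show "N_sc c (N_add x y) = N_add (N_sc c x) (N_sc c y)" for c
      by (simp add: x y theta_add[symmetric] theta_sc[symmetric] M.scale_right_distrib)
  next
    fix c x assume "x \<in> range \<theta>"
    then show "N_sc c x \<in> range \<theta>" by (auto simp: theta_sc[symmetric])
  next
    fix x assume "x \<in> range \<theta>"
    then obtain a where x: "x = \<theta> a" by blast
    show "N_add N_zero x = x" by (simp add: x theta_zero[symmetric] theta_add[symmetric])
    show "N_sc 1 x = x" by (simp add: x theta_sc[symmetric])
    show "\<exists>y\<in>range \<theta>. N_add x y = N_zero"
      by (rule bexI[of _ "\<theta> (- a)"]) (simp_all add: x theta_zero[symmetric] theta_add[symmetric])
    fix c d
    show "N_sc (c + d) x = N_add (N_sc c x) (N_sc d x)"
      by (simp add: x theta_sc[symmetric] theta_add[symmetric] M.scale_left_distrib)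
    show "N_sc (c * d) x = N_sc c (N_sc d x)" by (simp add: x theta_sc[symmetric])
  qed
  show "clin (range \<theta>) N_add N_sc (range \<theta>) N_add N_sc (\<lambda>x. T (N_act h x))" for h
    unfolding clin_def by (auto simp: T_N_act_theta theta_add[symmetric] theta_sc[symmetric] pi.add pi.scale)
  fix h k v assume "v \<in> range \<theta>"
  then obtain m where v: "v = \<theta> m" by blast
  show "T (N_act (h + k) v) = N_add (T (N_act h v)) (T (N_act k v))"
    by (simp add: v T_N_act_theta theta_add[symmetric] pi_add_left)
  show "T (N_act 1 v) = v" by (simp add: v T_N_act_theta pi_one)
  show "T (N_act (sc c h) v) = N_sc c (T (N_act h v))" for c
    by (simp add: v T_N_act_theta theta_sc[symmetric] pi_sc_left)
  show "csum N_add N_zero (map (\<lambda>(a, b). T (N_act h (T (N_act a (T (N_act (S b) v)))))) (D k)) =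
        csum N_add N_zero (map (\<lambda>(a, b). T (N_act (h * a) (T (N_act (S b) v)))) (D k))"
    by (simp add: v T_N_act_theta split_def csum_theta pi_absorb_left)
  show "csum N_add N_zero (map (\<lambda>(a, b). T (N_act a (T (N_act (S b) (T (N_act k v)))))) (D h)) =
        csum N_add N_zero (map (\<lambda>(a, b). T (N_act a (T (N_act (S b * k) v)))) (D h))"
    by (simp add: v T_N_act_theta split_def csum_theta pi_absorb_right)
  show "csum N_add N_zero (map (\<lambda>(a, b). T (N_act h (T (N_act (S a) (T (N_act b v)))))) (D k)) =
        csum N_add N_zero (map (\<lambda>(a, b). T (N_act (h * S a) (T (N_act b v)))) (D k))"
    by (simp add: v T_N_act_theta split_def csum_theta pi_absorb_antipode_left)
  show "csum N_add N_zero (map (\<lambda>(a, b). T (N_act (S a) (T (N_act b (T (N_act k v)))))) (D h)) =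
        csum N_add N_zero (map (\<lambda>(a, b). T (N_act (S a) (T (N_act (b * k) v)))) (D h))"
    by (simp add: v T_N_act_theta split_def csum_theta pi_absorb_antipode_right)
qed

subsection \<open>The c-condition\<close>

definition eps_word :: "'h \<Rightarrow> ('h list \<Rightarrow>\<^sub>0 'k)" where
  "eps_word h = (\<Sum>i\<leftarrow>D h. tmul (gen (fst i)) (gen (S (snd i))))"

lemma Q_gen_mult_eps_word:
  "Q (\<Sum>i\<leftarrow>D k. tmul (gen (h * fst i)) (gen (S (snd i)))) = Q (tmul (gen h) (eps_word k))"
proof -
  have "Q (\<Sum>i\<leftarrow>D k. tmul (gen (h * fst i)) (gen (S (snd i))))
      = Q (\<Sum>i\<leftarrow>D k. tmul (tmul (gen h) (gen (fst i))) (gen (S (snd i))))"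
    using Q_absorb_left[where h = h and k = k, symmetric] by (simp only: split_def)
  also have "\<dots> = Q (tmul (gen h) (eps_word k))"
    by (simp only: eps_word_def tmul_right.sum_list_map tmul_assoc)
  finally show ?thesis .
qed

lemma Q_eps_word_mult_gen:
  "Q (\<Sum>i\<leftarrow>D h. tmul (gen (fst i)) (gen (S (snd i) * k))) = Q (tmul (eps_word h) (gen k))"
proof -
  have "Q (\<Sum>i\<leftarrow>D h. tmul (gen (fst i)) (gen (S (snd i) * k)))
      = Q (\<Sum>i\<leftarrow>D h. tmul (tmul (gen (fst i)) (gen (S (snd i)))) (gen k))"
    using Q_absorb_right[where h = h and k = k, symmetric] by (simp only: split_def)
  also have "\<dots> = Q (tmul (eps_word h) (gen k))"
    by (simp only: eps_word_def tmul_left.sum_list_map)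
  finally show ?thesis .
qed

lemma Q_coproduct_bsum_rep:
  "bvalid sc D S l \<Longrightarrow>
   Q (\<Sum>i\<leftarrow>D h. tmul (gen (fst i)) (bsum_rep l (S (snd i)))) = Q (tmul (eps_word h) (bsum_rep l 1))"
proof (induction l)
  case (Cons y l)
  obtain h' x where y: "y = (h', x)" by force
  with Cons.prems have "bvalid sc D S l" by simp
  note IH = Cons.IH[OF this]
  have "Q (\<Sum>i\<leftarrow>D h. tmul (gen (fst i)) (bsum_rep (y # l) (S (snd i))))
      = Q (tmul (\<Sum>i\<leftarrow>D h. tmul (gen (fst i)) (gen (S (snd i) * h'))) (rep x)
        + (\<Sum>i\<leftarrow>D h. tmul (gen (fst i)) (bsum_rep l (S (snd i)))))"
    by (simp add: y bsum_rep_def tmul_right.add sum_list_addf tmul_left.sum_list_map tmul_assoc)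
  also have "\<dots> = Q (tmul (tmul (eps_word h) (gen h')) (rep x) + tmul (eps_word h) (bsum_rep l 1))"
    by (rule Q_cong_add[OF Q_cong_mul[OF Q_eps_word_mult_gen refl] IH])
  also have "\<dots> = Q (tmul (eps_word h) (bsum_rep (y # l) 1))"
    by (simp add: y bsum_rep_def tmul_right.add tmul_assoc)
  finally show ?case .
qed (simp add: bsum_rep_def)

lemma pi_coproduct_Hbar:
  assumes "f \<in> Hb"
  shows "(\<Sum>i\<leftarrow>D h. \<pi> (fst i) (hpa (f (S (snd i))) m)) = tev (eps_word h) (hpa (f 1) m)"
proof -
  obtain l where v: "bvalid sc D S l" and f: "f = bsum sc D S l" using assms by (auto simp: Hbar_iff)
  have "(\<Sum>i\<leftarrow>D h. \<pi> (fst i) (hpa (f (S (snd i))) m))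
      = hpa (Q (\<Sum>i\<leftarrow>D h. tmul (gen (fst i)) (bsum_rep l (S (snd i))))) m"
    by (simp add: f bsum_eq[OF v] hp_act_Q tev.sum_list_map teval_tmul)
  also have "\<dots> = tev (eps_word h) (hpa (f 1) m)"
    by (simp only: Q_coproduct_bsum_rep[OF v]) (simp add: hp_act_Q teval_tmul f bsum_eq[OF v])
  finally show ?thesis .
qed

lemma contract_shift_key:
  "contract (pmmap (shift_key g) p) =
   (\<Sum>k\<in>Poly_Mapping.keys p. scM (Poly_Mapping.lookup p k) (hpa (fst k g) (snd k)))"
  by (subst module_hom_expand[OF module_hom_pmmap])
    (simp add: contract.sum contract.scale shift_key_def case_prod_beta etn_single contract_etn hom_act_def)

lemma contract_coproduct:
  assumes "p \<in> Hb_supp"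
  shows "(\<Sum>i\<leftarrow>D h. \<pi> (fst i) (contract (pmmap (shift_key (S (snd i))) p))) = tev (eps_word h) (contract p)"
proof -
  have "(\<Sum>i\<leftarrow>D h. \<pi> (fst i) (contract (pmmap (shift_key (S (snd i))) p)))
     = (\<Sum>k\<in>Poly_Mapping.keys p. scM (Poly_Mapping.lookup p k)
          (\<Sum>i\<leftarrow>D h. \<pi> (fst i) (hpa (fst k (S (snd i))) (snd k))))"
    by (simp add: contract_shift_key pi.sum pi.scale M.module_hom_scale_self[THEN module_hom.sum_list_map] sum_list_sum_swap)
  also have "\<dots> = (\<Sum>k\<in>Poly_Mapping.keys p. scM (Poly_Mapping.lookup p k) (tev (eps_word h) (hpa (fst k 1) (snd k))))"
    using assms by (intro sum.cong refl) (auto simp: pi_coproduct_Hbar)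
  also have "\<dots> = tev (eps_word h) (contract p)"
    by (simp add: contract_def lin_ext_def case_prod_beta tev_right.sum tev_right.scale)
  finally show ?thesis .
qed

lemma Qt_sum_etn_fun:
  assumes "\<And>i. i \<in> set l \<Longrightarrow> (\<lambda>k. Q (F i k)) \<in> Hb"
  shows "Qt (\<Sum>i\<leftarrow>l. etn (\<lambda>k. Q (F i k)) e) = Qt (etn (\<lambda>k. Q (\<Sum>i\<leftarrow>l. F i k)) e)
    \<and> (\<lambda>k. Q (\<Sum>i\<leftarrow>l. F i k)) \<in> Hb"
  using assms
proof (induction l)
  case Nil
  show ?case using Qt_etn_fzero[of e] fzero_in_Hbar by (simp add: fzero_Q)
next
  case (Cons a l)
  then have ha: "(\<lambda>k. Q (F a k)) \<in> Hb"
    and IH: "Qt (\<Sum>i\<leftarrow>l. etn (\<lambda>k. Q (F i k)) e) = Qt (etn (\<lambda>k. Q (\<Sum>i\<leftarrow>l. F i k)) e)"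
    and hl: "(\<lambda>k. Q (\<Sum>i\<leftarrow>l. F i k)) \<in> Hb" by auto
  have fa: "fadd sc D S (\<lambda>k. Q (F a k)) (\<lambda>k. Q (\<Sum>i\<leftarrow>l. F i k)) = (\<lambda>k. Q (\<Sum>i\<leftarrow>a # l. F i k))"
    by (simp add: fadd_Q)
  have "Qt (\<Sum>i\<leftarrow>a # l. etn (\<lambda>k. Q (F i k)) e)
      = Qt (etn (\<lambda>k. Q (F a k)) e + etn (\<lambda>k. Q (\<Sum>i\<leftarrow>l. F i k)) e)"
    using Qt_cong_add[OF refl IH] by simp
  also have "\<dots> = Qt (etn (\<lambda>k. Q (\<Sum>i\<leftarrow>a # l. F i k)) e)"
    using Qt_etn_add_left[OF ha hl, of e] by (simp add: fa)
  finally show ?case using fadd_in_Hbar[OF ha hl] fa by simp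
qed

text \<open>The relation \<open>[h][k\<^sub>1][S k\<^sub>2] = [h k\<^sub>1][S k\<^sub>2]\<close> of \<open>H\<^sub>p\<^sub>a\<^sub>r\<close> gathers
  \<open>\<Sum> (h\<^sub>1 \<triangleright> \<phi>(1)) \<triangleleft> [S h\<^sub>2]\<close> into \<open>\<phi>(1) \<triangleleft> \<epsilon>\<^sub>h\<close>.\<close>
lemma Qt_coproduct_phi1:
  "Qt (\<Sum>i\<leftarrow>D h. etn (hom_act (fst i) phi1) (\<pi> (S (snd i)) e)) = \<theta> (tev (eps_word h) e)"
proof -
  let ?F = "\<lambda>i k. tmul (gen (k * fst i)) (gen (S (snd i)))"
  have ract_gen: "ract sc D S (hom_act a phi1) (Q (gen g)) = (\<lambda>k. Q (tmul (gen (k * a)) (gen g)))" for a g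
    using ract_eq[OF hom_act_in_Hbar[OF phi1_in_Hbar], of "Q (gen g)" a]
    by (simp add: hom_act_def phi1_apply hp_mul_Q)
  have F_in: "(\<lambda>k. Q (?F i k)) \<in> Hb" for i
    using ract_in_Hbar[OF hom_act_in_Hbar[OF phi1_in_Hbar] Q_in_Hp, of "fst i" "gen (S (snd i))"]
    by (simp add: ract_gen)
  have "Qt (\<Sum>i\<leftarrow>D h. etn (hom_act (fst i) phi1) (\<pi> (S (snd i)) e))
      = Qt (\<Sum>i\<leftarrow>D h. etn (\<lambda>k. Q (?F i k)) e)"
  proof (rule Qt_cong_sum_list)
    fix i
    show "Qt (etn (hom_act (fst i) phi1) (\<pi> (S (snd i)) e)) = Qt (etn (\<lambda>k. Q (?F i k)) e)"
      using Qt_etn_balanced[OF hom_act_in_Hbar[OF phi1_in_Hbar] Q_in_Hp, of "fst i" "gen (S (snd i))" e]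
      by (simp add: ract_gen hp_act_Q)
  qed
  also have "\<dots> = Qt (etn (\<lambda>k. Q (\<Sum>i\<leftarrow>D h. ?F i k)) e)"
    using Qt_sum_etn_fun[of "D h" ?F e] F_in by blast
  also have "(\<lambda>k. Q (\<Sum>i\<leftarrow>D h. ?F i k)) = ract sc D S phi1 (Q (eps_word h))"
    by (simp add: fun_eq_iff Q_gen_mult_eps_word ract_eq phi1_in_Hbar phi1_apply hp_mul_Q)
  also have "Qt (etn (ract sc D S phi1 (Q (eps_word h))) e) = Qt (etn phi1 (hpa (Q (eps_word h)) e))"
    by (rule Qt_etn_balanced[OF phi1_in_Hbar Q_in_Hp])
  finally show ?thesis by (simp add: theta_eq hp_act_Q)
qed

lemma csum_Qt: "csum N_add N_zero (map (\<lambda>i. Qt (F i)) l) = Qt (\<Sum>i\<leftarrow>l. F i)"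
  by (induction l) (simp_all add: csum_def N_zero_eq N_add_Qt)

lemma Tc_eq:
  "Tc D S N_add N_zero N_act T h x = csum N_add N_zero (map (\<lambda>i. N_act (fst i) (T (N_act (S (snd i)) x))) (D h))"
  by (simp add: Tc_def split_def)

lemma T_c_condition: "x \<in> N \<Longrightarrow> Tc D S N_add N_zero N_act T h (T x) = T (Tc D S N_add N_zero N_act T h x)"
proof -
  assume "x \<in> N"
  then obtain p where p: "p \<in> Hb_supp" and x: "x = Qt p" by (rule N_Qt_form)
  have "Tc D S N_add N_zero N_act T h (T x)
      = Qt (\<Sum>i\<leftarrow>D h. etn (hom_act (fst i) phi1) (\<pi> (S (snd i)) (contract p)))"
    by (simp only: Tc_eq x T_Qt T_N_act_theta) (simp add: N_act_theta csum_Qt)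
  also have "\<dots> = \<theta> (tev (eps_word h) (contract p))" by (rule Qt_coproduct_phi1)
  also have "\<dots> = \<theta> (\<Sum>i\<leftarrow>D h. \<pi> (fst i) (contract (pmmap (shift_key (S (snd i))) p)))"
    by (simp add: contract_coproduct[OF p])
  also have "\<dots> = T (Tc D S N_add N_zero N_act T h x)"
    by (simp add: Tc_eq x N_act_Qt T_Qt N_act_theta csum_Qt contract.sum_list_map contract_etn hom_act_def hpa_phi1)
  finally show ?thesis .
qed

subsection \<open>Properness\<close>

lemma hom_act_phi_eq_ract:
  assumes "x \<in> Hp"
  shows "hom_act h (phi sc D S x) = ract sc D S (hom_act h phi1) x"
proof -
  have "ract sc D S (hom_act h phi1) x = (\<lambda>k. hp_mul sc D S (hom_act h phi1 k) x)"
    by (rule ract_eq[OF hom_act_in_Hbar[OF phi1_in_Hbar] assms])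
  then show ?thesis using assms by (simp add: hom_act_def phi_def brk_eq hp_one_eq hp_mul_Q hp_mul_rep)
qed

definition phi1_sum :: "('h \<times> 'm) list \<Rightarrow> (('h \<Rightarrow> ('h, 'k) hpar) \<times> 'm \<Rightarrow>\<^sub>0 'k)" where
  "phi1_sum le = (\<Sum>(h, e)\<leftarrow>le. etn (hom_act h phi1) e)"

lemma Qt_tsc_etn_bsum_phi1_sum:
  "bvalid sc D S l \<Longrightarrow> \<exists>le. Qt (tsc c (etn (bsum sc D S l) m)) = Qt (phi1_sum le)"
proof (induction l)
  case Nil
  have "Qt (tsc c (etn (fzero sc D S) m)) = Qt (tsc c 0)" by (rule Qt_cong_tsc[OF Qt_etn_fzero])
  then show ?case by (intro exI[of _ "[]"]) (simp add: bsum_Nil phi1_sum_def)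
next
  case (Cons y l)
  obtain h x where y: "y = (h, x)" by force
  with Cons.prems have x: "x \<in> Hp" and l: "bvalid sc D S l" by auto
  obtain le where le: "Qt (tsc c (etn (bsum sc D S l) m)) = Qt (phi1_sum le)" using Cons.IH[OF l] by blast
  have hphi: "hom_act h (phi sc D S x) \<in> Hb" by (intro hom_act_in_Hbar phi_in_Hbar x)
  have "bsum sc D S l \<in> Hb" using l by (auto simp: Hbar_iff)
  then have "Qt (tsc c (etn (bsum sc D S (y # l)) m))
      = Qt (tsc c (etn (hom_act h (phi sc D S x)) m) + tsc c (etn (bsum sc D S l) m))"
    unfolding y bsum_Cons by (rule Qt_cong_tsc[OF Qt_etn_add_left[OF hphi], simplified fvs.scale_right_distrib])
  moreover have "Qt (tsc c (etn (hom_act h (phi sc D S x)) m)) = Qt (etn (hom_act h phi1) (scM c (hpa x m)))"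
  proof -
    have "Qt (etn (hom_act h (phi sc D S x)) m) = Qt (etn (hom_act h phi1) (hpa x m))"
      using Qt_etn_balanced[OF hom_act_in_Hbar[OF phi1_in_Hbar] x] by (simp add: hom_act_phi_eq_ract[OF x])
    then show ?thesis
      using Qt_etn_sc_right[OF hom_act_in_Hbar[OF phi1_in_Hbar]] by (metis Qt_cong_tsc)
  qed
  ultimately have "Qt (tsc c (etn (bsum sc D S (y # l)) m))
      = Qt (etn (hom_act h phi1) (scM c (hpa x m)) + phi1_sum le)"
    using Qt_cong_add[OF _ le] by metis
  also have "\<dots> = Qt (phi1_sum ((h, scM c (hpa x m)) # le))" by (simp add: phi1_sum_def)
  finally show ?case by blast
qed

lemma Qt_phi1_sum:
  assumes "p \<in> Hb_supp"
  shows "\<exists>le. Qt p = Qt (phi1_sum le)"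
proof -
  have "\<exists>le. Qt (\<Sum>k\<in>K. tsc (Poly_Mapping.lookup p k) (etn (fst k) (snd k))) = Qt (phi1_sum le)"
    if "finite K" "K \<subseteq> Poly_Mapping.keys p" for K
    using that
  proof (induction K rule: finite_induct)
    case empty
    then show ?case by (intro exI[of _ "[]"]) (simp add: phi1_sum_def)
  next
    case (insert k K)
    then obtain le where le: "Qt (\<Sum>k\<in>K. tsc (Poly_Mapping.lookup p k) (etn (fst k) (snd k))) = Qt (phi1_sum le)"
      by auto
    have "fst k \<in> Hb" using insert assms by auto
    then obtain l where l: "bvalid sc D S l" and f: "fst k = bsum sc D S l" by (auto simp: Hbar_iff)
    obtain le' where le': "Qt (tsc (Poly_Mapping.lookup p k) (etn (fst k) (snd k))) = Qt (phi1_sum le')"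
      using Qt_tsc_etn_bsum_phi1_sum[OF l] unfolding f by blast
    have "Qt (\<Sum>k\<in>insert k K. tsc (Poly_Mapping.lookup p k) (etn (fst k) (snd k)))
        = Qt (tsc (Poly_Mapping.lookup p k) (etn (fst k) (snd k))
              + (\<Sum>k\<in>K. tsc (Poly_Mapping.lookup p k) (etn (fst k) (snd k))))"
      using insert by simp
    also have "\<dots> = Qt (phi1_sum (le' @ le))"
      using Qt_cong_add[OF le' le] by (simp add: phi1_sum_def)
    finally show ?case by blast
  qed
  from this[OF finite_keys subset_refl] obtain le
    where "Qt (\<Sum>k\<in>Poly_Mapping.keys p. tsc (Poly_Mapping.lookup p k) (etn (fst k) (snd k))) = Qt (phi1_sum le)"
    by blast
  moreover have "(\<Sum>k\<in>Poly_Mapping.keys p. tsc (Poly_Mapping.lookup p k) (etn (fst k) (snd k))) = p"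
    by (subst (3) pm_expand) (simp add: etn_def)
  ultimately show ?thesis by metis
qed

lemma csum_N_act_theta:
  "csum N_add N_zero (map (\<lambda>(h, t). N_act h t) (map (\<lambda>(h, e). (h, \<theta> e)) le)) = Qt (phi1_sum le)"
  by (induction le) (auto simp: csum_def N_zero_eq N_act_theta N_add_Qt phi1_sum_def)

lemma N_generated_by_T_image:
  "x \<in> N \<Longrightarrow> \<exists>l. set l \<subseteq> UNIV \<times> T ` N \<and> x = csum N_add N_zero (map (\<lambda>(h, t). N_act h t) l)"
proof -
  assume "x \<in> N"
  then obtain p where p: "p \<in> Hb_supp" and x: "x = Qt p" by (rule N_Qt_form)
  obtain le where le: "Qt p = Qt (phi1_sum le)" using Qt_phi1_sum[OF p] by blast
  show ?thesis
  proof (intro exI conjI)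
    show "set (map (\<lambda>(h, e). (h, \<theta> e)) le) \<subseteq> UNIV \<times> T ` N"
      unfolding T_image by auto
    show "x = csum N_add N_zero (map (\<lambda>(h, t). N_act h t) (map (\<lambda>(h, e). (h, \<theta> e)) le))"
      by (simp only: csum_N_act_theta x le)
  qed
qed

lemma secondary_dilation_proper: "proper_dilation sc D S scM \<pi> N N_add N_zero N_sc N_act T \<theta>"
  unfolding proper_dilation_def dilation_def
  using N_hmod T_clin T_idem T_c_condition pmod_T_image bij_theta theta_add theta_sc T_N_act_theta
    N_generated_by_T_image
  by simp

end

theorem mainTheorem13:
  fixes sc :: "'k::field \<Rightarrow> 'h::ring_1 \<Rightarrow> 'h"
    and D :: "'h \<Rightarrow> ('h \<times> 'h) list" and eps :: "'h \<Rightarrow> 'k" and S :: "'h \<Rightarrow> 'h"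
    and scM :: "'k \<Rightarrow> 'm::ab_group_add \<Rightarrow> 'm" and \<pi> :: "'h \<Rightarrow> 'm \<Rightarrow> 'm"
  assumes "hopf_algebra sc D eps S"
    and "pmod sc D S UNIV (+) 0 scM \<pi>"
  shows "(\<forall>l l' y. bvalid sc D S l \<and> bvalid sc D S l' \<and> y \<in> hp_carrier sc D S \<and>
              bsum sc D S l = bsum sc D S l' \<longrightarrow>
              bsum sc D S (rmul_list sc D S l y) = bsum sc D S (rmul_list sc D S l' y))
         \<and> bimodule sc (Hbar sc D S) (fadd sc D S) (fzero sc D S) (fsc sc D S) hom_act
              (hp_carrier sc D S) (hp_add sc D S) (hp_sc sc D S) (hp_mul sc D S) (hp_one sc D S)
              (ract sc D S)
         \<and> proper_dilation sc D S scM \<pi>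
              (Nsec sc D S scM \<pi>) (nadd sc D S scM \<pi>) (nzero sc D S scM \<pi>) (nsc sc D S scM \<pi>)
              (nact sc D S scM \<pi>) (Tsec sc D S scM \<pi>) (phisec sc D S scM \<pi>)"
proof -
  have "\<forall>c x y. sc c (x * y) = sc c x * y \<and> sc c (x * y) = x * sc c y"
    using assms(1) unfolding hopf_algebra_def by blast
  then interpret partial_hmodule sc D S scM \<pi>
    using assms(2) by unfold_locales blast+
  show ?thesis
    using bsum_rmul_list_cong Hbar_bimodule secondary_dilation_proper by blast
qed

end
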